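(* Let $p\in\{2,3,4\}$. Let $F,G:\mathbb{R}\to\mathbb{R}$ be of the form $$F=\overline F+\widetilde F+\varphi\widehat F,\qquad G=\overline G+\widetilde G+\varphi\widehat G,$$ where $\overline F,\overline G\in\mathcal Y$, $\overline F$ is odd and $\overline G$ is even, $\widetilde F$ and $\widehat G$ are odd polynomial functions, and $\widehat F$ and $\widetilde G$ are even polynomial functions. Then there exist $a\in\mathbb{R}$ and functions $$A=\overline A+\widetilde A+\varphi\widehat A,\qquad B=\overline B+\widetilde B+\varphi\widehat B,$$ with $\overline A,\overline B\in\mathcal Y$, $\overline A$ even, $\overline B$ odd, $\widetilde A$ and $\widehat B$ even polynomial functions, $\widehat A$ and $\widetilde B$ odd polynomial functions, satisfying $$(\mathcal LA)'+a(3Q-2Q^p)'=F,\qquad (\mathcal LB)'+3aQ''-3A''-pQ^{p-1}A=G,$$ and such that $$\deg\widetilde A\le1+\deg\widetilde F,\quad \deg\widetilde B\le\max(1+\deg\widetilde G,\deg\widetilde F),$$ $$\deg\widehat A\le1+\deg\widehat F,\quad \deg\widehat B\le\max(1+\deg\widehat G,\deg\widehat F).$$ Moreover: if $\widetilde F=0$ (respectively $\widehat F=0$) then $\widetilde A=0$ (respectively $\widehat A=0$); if $\widetilde A''=0$ and $\widetilde G=0$ then $\widetilde B=0$; if $\widehat A''=0$ and $\widehat G=0$ then $\deg\widehat B=0$.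
   Context: $Q$ is the unique even positive $H^1$ solution of $Q''+Q^p=Q$, i.e. $Q(x)=\big(\frac{p+1}{2\cosh^2(\frac{p-1}2x)}\big)^{1/(p-1)}$. $\mathcal L$ is the operator $\mathcal Lf=-f''+f-pQ^{p-1}f$. $\varphi(x)=-Q'(x)/Q(x)=\tanh(\frac{p-1}2x)$. $\mathcal Y$ denotes the set of $C^\infty$ functions $f$ on $\mathbb{R}$ such that for every $j\in\mathbb{N}$ there exist $K_j,r_j>0$ with $|f^{(j)}(x)|\le K_j(1+|x|)^{r_j}e^{-|x|}$ for all $x\in\mathbb{R}$. *)

theory Defs
  imports "HOL-Analysis.Analysis" "HOL-Computational_Algebra.Polynomial"
begin

definition Qp :: "nat \<Rightarrow> real \<Rightarrow> real" where
  "Qp p x = ((real p + 1) / (2 * (cosh ((real p - 1) / 2 * x))\<^sup>2)) powr (1 / (real p - 1))"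

definition phi :: "nat \<Rightarrow> real \<Rightarrow> real" where
  "phi p x = tanh ((real p - 1) / 2 * x)"

definition Lop :: "nat \<Rightarrow> (real \<Rightarrow> real) \<Rightarrow> real \<Rightarrow> real" where
  "Lop p f x = - deriv (deriv f) x + f x - real p * (Qp p x) ^ (p - 1) * f x"

definition classY :: "(real \<Rightarrow> real) \<Rightarrow> bool" where
  "classY f \<longleftrightarrow>
     (\<forall>j x. (deriv ^^ j) f differentiable at x) \<and>
     (\<forall>j. \<exists>K r. K > 0 \<and> r > 0 \<and>
        (\<forall>x. \<bar>(deriv ^^ j) f x\<bar> \<le> K * (1 + \<bar>x\<bar>) powr r * exp (- \<bar>x\<bar>)))"

definition odd_fun :: "(real \<Rightarrow> real) \<Rightarrow> bool" where
  "odd_fun f \<longleftrightarrow> (\<forall>x. f (- x) = - f x)"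

definition even_fun :: "(real \<Rightarrow> real) \<Rightarrow> bool" where
  "even_fun f \<longleftrightarrow> (\<forall>x. f (- x) = f x)"

end

theory Submission
  imports Defs "HOL-Real_Asymp.Real_Asymp"
begin

text \<open>
  The linearized operator \<open>L = - D\<^sup>2 + 1 - p Q\<^sup>p\<^sup>-\<^sup>1\<close> has the odd kernel element
  \<open>y1 = - Q' = Q \<phi>\<close> and an even, exponentially growing second solution \<open>y2\<close>. By variation of
  constants, \<open>L u = h\<close> has a solution in \<open>\<Y>\<close> whenever \<open>h \<in> \<Y>\<close> and \<open>\<integral> y1 h = 0\<close>, and the
  solution inherits the parity of \<open>h\<close>; for even \<open>h\<close> the integral vanishes since \<open>y1 h\<close> is odd.

  For \<open>A = A\<^sub>0 + P + \<phi> R\<close> with polynomials \<open>P\<close>, \<open>R\<close>, the difference between \<open>L A\<close> and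
  \<open>L A\<^sub>0 + (P - P'') + \<phi> (R - R'')\<close> lies in \<open>\<Y>\<close>, and \<open>1 - D\<^sup>2\<close> is invertible on polynomials.
  After one integration the first equation therefore reduces to an even problem for \<open>A\<^sub>0\<close>, plus
  \<open>a A1\<close> with the explicit solution of \<open>L A1 = - (3 Q - 2 Q\<^sup>p)\<close>. The integrated second equation
  has an odd right-hand side, whose integral against \<open>y1\<close> need not vanish; but its \<open>a\<close>-dependent
  part has integral \<open>- \<gamma> \<integral> Q\<^sup>2\<close> against \<open>y1\<close>, where \<open>\<gamma> = - 1/4 - (1 - k)/(2 k)\<close> with
  \<open>k = (p - 1)/2\<close> is nonzero because \<open>p \<noteq> 5\<close>; this fixes \<open>a\<close>. Even functions in \<open>\<Y>\<close> have
  primitives in \<open>\<Y>\<close> only up to a multiple of \<open>\<phi>'\<close>; these multiples are absorbed by the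
  constant term of \<open>B\<^sub>h\<close>.
\<close>

section \<open>Smooth functions with polynomially weighted bounds\<close>

definition weighted_poly_bounded :: "(real \<Rightarrow> real) \<Rightarrow> (real \<Rightarrow> real) \<Rightarrow> bool" where
  "weighted_poly_bounded w f \<longleftrightarrow> (\<exists>K N. \<forall>x. \<bar>f x\<bar> \<le> K * (1 + \<bar>x\<bar>) ^ N * w x)"

lemma weighted_poly_boundedI:
  "(\<And>x. \<bar>f x\<bar> \<le> K * (1 + \<bar>x\<bar>) ^ N * w x) \<Longrightarrow> weighted_poly_bounded w f"
  unfolding weighted_poly_bounded_def by blast

lemma weighted_poly_boundedE:
  assumes "weighted_poly_bounded w f" and w: "\<And>x. w x \<ge> 0"
  obtains K N where "K \<ge> 0" "\<And>x. \<bar>f x\<bar> \<le> K * (1 + \<bar>x\<bar>) ^ N * w x"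
proof -
  obtain K N where KN: "\<And>x. \<bar>f x\<bar> \<le> K * (1 + \<bar>x\<bar>) ^ N * w x"
    using assms(1) unfolding weighted_poly_bounded_def by blast
  have "\<bar>f x\<bar> \<le> max K 0 * (1 + \<bar>x\<bar>) ^ N * w x" for x
  proof -
    have "K * ((1 + \<bar>x\<bar>) ^ N * w x) \<le> max K 0 * ((1 + \<bar>x\<bar>) ^ N * w x)"
      using w[of x] by (intro mult_right_mono) auto
    then show ?thesis using KN[of x] by (simp only: mult.assoc)
  qed
  then show thesis by (intro that[of "max K 0"]) auto
qed

lemma weighted_poly_bounded_const_bound:
  "(\<And>x. \<bar>f x\<bar> \<le> C) \<Longrightarrow> weighted_poly_bounded (\<lambda>x. 1) f"
  by (rule weighted_poly_boundedI[of _ C 0]) simp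

lemma weighted_poly_bounded_add:
  assumes f: "weighted_poly_bounded w f" and g: "weighted_poly_bounded w g" and w: "\<And>x. w x \<ge> 0"
  shows "weighted_poly_bounded w (\<lambda>x. f x + g x)"
proof -
  obtain K1 N1 where K1: "K1 \<ge> 0" "\<And>x. \<bar>f x\<bar> \<le> K1 * (1 + \<bar>x\<bar>) ^ N1 * w x"
    using weighted_poly_boundedE[OF f w] by blast
  obtain K2 N2 where K2: "K2 \<ge> 0" "\<And>x. \<bar>g x\<bar> \<le> K2 * (1 + \<bar>x\<bar>) ^ N2 * w x"
    using weighted_poly_boundedE[OF g w] by blast
  have "\<bar>f x + g x\<bar> \<le> (K1 + K2) * (1 + \<bar>x\<bar>) ^ (N1 + N2) * w x" for x
  proof -
    have "(1 + \<bar>x\<bar>) ^ N1 \<le> (1 + \<bar>x\<bar>) ^ (N1 + N2)" "(1 + \<bar>x\<bar>) ^ N2 \<le> (1 + \<bar>x\<bar>) ^ (N1 + N2)"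
      by (auto intro: power_increasing)
    then have "K1 * (1 + \<bar>x\<bar>) ^ N1 * w x \<le> K1 * (1 + \<bar>x\<bar>) ^ (N1 + N2) * w x"
      "K2 * (1 + \<bar>x\<bar>) ^ N2 * w x \<le> K2 * (1 + \<bar>x\<bar>) ^ (N1 + N2) * w x"
      using K1(1) K2(1) w[of x] by (auto intro!: mult_right_mono mult_left_mono)
    then show ?thesis
      using K1(2)[of x] K2(2)[of x] abs_triangle_ineq[of "f x" "g x"] by (simp add: algebra_simps)
  qed
  then show ?thesis by (rule weighted_poly_boundedI)
qed

lemma weighted_poly_bounded_cmult:
  assumes "weighted_poly_bounded w f"
  shows "weighted_poly_bounded w (\<lambda>x. c * f x)"
proof -
  obtain K N where KN: "\<And>x. \<bar>f x\<bar> \<le> K * (1 + \<bar>x\<bar>) ^ N * w x"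
    using assms unfolding weighted_poly_bounded_def by blast
  have "\<bar>c * f x\<bar> \<le> (\<bar>c\<bar> * K) * (1 + \<bar>x\<bar>) ^ N * w x" for x
    using mult_left_mono[OF KN[of x], of "\<bar>c\<bar>"] by (simp add: abs_mult mult.assoc)
  then show ?thesis by (rule weighted_poly_boundedI)
qed

lemma weighted_poly_bounded_minus:
  "weighted_poly_bounded w f \<Longrightarrow> weighted_poly_bounded w (\<lambda>x. - f x)"
  using weighted_poly_bounded_cmult[of w f "- 1"] by simp

lemma weighted_poly_bounded_diff:
  "\<lbrakk>weighted_poly_bounded w f; weighted_poly_bounded w g; \<And>x. w x \<ge> 0\<rbrakk>
    \<Longrightarrow> weighted_poly_bounded w (\<lambda>x. f x - g x)"
  using weighted_poly_bounded_add[of w f "\<lambda>x. - g x"] weighted_poly_bounded_minus[of w g] by simp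

lemma weighted_poly_bounded_mult:
  assumes f: "weighted_poly_bounded v f" and g: "weighted_poly_bounded w g"
  shows "weighted_poly_bounded (\<lambda>x. v x * w x) (\<lambda>x. f x * g x)"
proof -
  obtain K1 N1 where K1: "\<And>x. \<bar>f x\<bar> \<le> K1 * (1 + \<bar>x\<bar>) ^ N1 * v x"
    using f unfolding weighted_poly_bounded_def by blast
  obtain K2 N2 where K2: "\<And>x. \<bar>g x\<bar> \<le> K2 * (1 + \<bar>x\<bar>) ^ N2 * w x"
    using g unfolding weighted_poly_bounded_def by blast
  have "\<bar>f x * g x\<bar> \<le> (K1 * K2) * (1 + \<bar>x\<bar>) ^ (N1 + N2) * (v x * w x)" for x
  proof -
    have "\<bar>f x * g x\<bar> \<le> (K1 * (1 + \<bar>x\<bar>) ^ N1 * v x) * (K2 * (1 + \<bar>x\<bar>) ^ N2 * w x)"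
      unfolding abs_mult by (rule mult_mono[OF K1 K2]) (auto intro: order.trans[OF abs_ge_zero K1])
    then show ?thesis by (simp add: power_add algebra_simps)
  qed
  then show ?thesis by (rule weighted_poly_boundedI)
qed

lemma weighted_poly_bounded_mono:
  assumes f: "weighted_poly_bounded v f" and v: "\<And>x. 0 \<le> v x" and vw: "\<And>x. v x \<le> w x"
  shows "weighted_poly_bounded w f"
proof -
  obtain K N where K: "K \<ge> 0" "\<And>x. \<bar>f x\<bar> \<le> K * (1 + \<bar>x\<bar>) ^ N * v x"
    using weighted_poly_boundedE[OF f v] by blast
  have "\<bar>f x\<bar> \<le> K * (1 + \<bar>x\<bar>) ^ N * w x" for x
    using K(2)[of x] mult_left_mono[OF vw[of x], of "K * (1 + \<bar>x\<bar>) ^ N"] K(1) by simp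
  then show ?thesis by (rule weighted_poly_boundedI)
qed

fun smooth_bounded_upto :: "(real \<Rightarrow> real) \<Rightarrow> nat \<Rightarrow> (real \<Rightarrow> real) \<Rightarrow> bool" where
  "smooth_bounded_upto w 0 f \<longleftrightarrow> f differentiable_on UNIV \<and> weighted_poly_bounded w f"
| "smooth_bounded_upto w (Suc m) f \<longleftrightarrow>
     f differentiable_on UNIV \<and> weighted_poly_bounded w f \<and> smooth_bounded_upto w m (deriv f)"

definition smooth_bounded :: "(real \<Rightarrow> real) \<Rightarrow> (real \<Rightarrow> real) \<Rightarrow> bool" where
  "smooth_bounded w f \<longleftrightarrow> (\<forall>m. smooth_bounded_upto w m f)"

abbreviation decaying :: "(real \<Rightarrow> real) \<Rightarrow> bool" where
  "decaying \<equiv> smooth_bounded (\<lambda>x. exp (- \<bar>x\<bar>))"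

abbreviation tempered :: "(real \<Rightarrow> real) \<Rightarrow> bool" where
  "tempered \<equiv> smooth_bounded (\<lambda>x. 1)"

lemma differentiable_on_UNIV_DERIV:
  "f differentiable_on UNIV \<Longrightarrow> (f has_real_derivative deriv f x) (at x)"
  unfolding differentiable_on_def using DERIV_deriv_iff_real_differentiable by blast

lemma DERIV_imp_differentiable_on_UNIV:
  "(\<And>x. (f has_real_derivative f' x) (at x)) \<Longrightarrow> f differentiable_on UNIV"
  unfolding differentiable_on_def using real_differentiable_def by blast

lemma deriv_fun_eqI: "(\<And>x. (f has_real_derivative f' x) (at x)) \<Longrightarrow> deriv f = f'"
  using DERIV_imp_deriv by blast

lemma deriv_deriv_eqI:
  assumes "\<And>x. (f has_real_derivative f1 x) (at x)" "\<And>x. (f1 has_real_derivative f2 x) (at x)"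
  shows "deriv (deriv f) = f2"
  using deriv_fun_eqI[OF assms(1)] deriv_fun_eqI[OF assms(2)] by simp

lemma smooth_bounded_upto_Suc_imp: "smooth_bounded_upto w (Suc m) f \<Longrightarrow> smooth_bounded_upto w m f"
  by (induction m arbitrary: f) auto

lemma smooth_bounded_upto_add:
  "\<lbrakk>smooth_bounded_upto w m f; smooth_bounded_upto w m g; \<And>x. w x \<ge> 0\<rbrakk>
    \<Longrightarrow> smooth_bounded_upto w m (\<lambda>x. f x + g x)"
proof (induction m arbitrary: f g)
  case (Suc m)
  then show ?case
    by (auto simp: weighted_poly_bounded_add differentiable_on_UNIV_DERIV
             deriv_fun_eqI[OF DERIV_add[OF differentiable_on_UNIV_DERIV differentiable_on_UNIV_DERIV]])
qed (auto intro: weighted_poly_bounded_add)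

lemma smooth_bounded_upto_cmult:
  "smooth_bounded_upto w m f \<Longrightarrow> smooth_bounded_upto w m (\<lambda>x. c * f x)"
proof (induction m arbitrary: f)
  case (Suc m)
  then show ?case
    by (auto simp: weighted_poly_bounded_cmult
             deriv_fun_eqI[OF DERIV_cmult[OF differentiable_on_UNIV_DERIV]])
qed (auto intro: weighted_poly_bounded_cmult)

lemma smooth_bounded_upto_mult:
  assumes "smooth_bounded_upto v m f" "smooth_bounded_upto w m g" "\<And>x. v x * w x \<ge> 0"
  shows "smooth_bounded_upto (\<lambda>x. v x * w x) m (\<lambda>x. f x * g x)"
  using assms
proof (induction m arbitrary: f g)
  case (Suc m)
  have "((\<lambda>x. f x * g x) has_real_derivative deriv f x * g x + f x * deriv g x) (at x)" for x
    using Suc.prems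
    by (auto intro!: derivative_eq_intros differentiable_on_UNIV_DERIV simp: mult.commute)
  then have "deriv (\<lambda>x. f x * g x) = (\<lambda>x. deriv f x * g x + f x * deriv g x)"
    by (rule deriv_fun_eqI)
  moreover have "smooth_bounded_upto (\<lambda>x. v x * w x) m (\<lambda>x. deriv f x * g x + f x * deriv g x)"
    using Suc.prems smooth_bounded_upto_Suc_imp[OF Suc.prems(1)] smooth_bounded_upto_Suc_imp[OF Suc.prems(2)]
    by (intro smooth_bounded_upto_add Suc.IH) auto
  ultimately show ?case using Suc.prems by (auto intro: weighted_poly_bounded_mult)
qed (auto intro: weighted_poly_bounded_mult)

lemma smooth_bounded_upto_mono:
  "\<lbrakk>smooth_bounded_upto v m f; \<And>x. 0 \<le> v x; \<And>x. v x \<le> w x\<rbrakk> \<Longrightarrow> smooth_bounded_upto w m f"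
  by (induction m arbitrary: f) (auto intro: weighted_poly_bounded_mono)

lemma smooth_bounded_upto_iff:
  "smooth_bounded_upto w m f \<longleftrightarrow>
     (\<forall>j\<le>m. (deriv ^^ j) f differentiable_on UNIV \<and> weighted_poly_bounded w ((deriv ^^ j) f))"
proof (induction m arbitrary: f)
  case (Suc m)
  have shift: "(deriv ^^ Suc j) f = (deriv ^^ j) (deriv f)" for j
    by (simp add: funpow_Suc_right del: funpow.simps)
  have "(\<forall>j\<le>Suc m. P ((deriv ^^ j) f)) \<longleftrightarrow> P f \<and> (\<forall>j\<le>m. P ((deriv ^^ j) (deriv f)))" for P
    by (auto simp: shift simp del: funpow.simps) (metis funpow_0 le_Suc_eq not0_implies_Suc Suc_le_mono shift)+
  from this[of "\<lambda>h. h differentiable_on UNIV \<and> weighted_poly_bounded w h"] show ?case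
    using Suc.IH[of "deriv f"] by simp
qed simp

lemma smooth_bounded_iff:
  "smooth_bounded w f \<longleftrightarrow>
     (\<forall>j. (deriv ^^ j) f differentiable_on UNIV \<and> weighted_poly_bounded w ((deriv ^^ j) f))"
  unfolding smooth_bounded_def smooth_bounded_upto_iff by blast

lemma smooth_bounded_add:
  "\<lbrakk>smooth_bounded w f; smooth_bounded w g; \<And>x. w x \<ge> 0\<rbrakk> \<Longrightarrow> smooth_bounded w (\<lambda>x. f x + g x)"
  unfolding smooth_bounded_def by (auto intro: smooth_bounded_upto_add)

lemma smooth_bounded_cmult: "smooth_bounded w f \<Longrightarrow> smooth_bounded w (\<lambda>x. c * f x)"
  unfolding smooth_bounded_def by (auto intro: smooth_bounded_upto_cmult)

lemma smooth_bounded_minus: "smooth_bounded w f \<Longrightarrow> smooth_bounded w (\<lambda>x. - f x)"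
  using smooth_bounded_cmult[of w f "-1"] by simp

lemma smooth_bounded_diff:
  "\<lbrakk>smooth_bounded w f; smooth_bounded w g; \<And>x. w x \<ge> 0\<rbrakk> \<Longrightarrow> smooth_bounded w (\<lambda>x. f x - g x)"
  using smooth_bounded_add[of w f "\<lambda>x. - g x"] smooth_bounded_minus[of w g] by simp

lemma smooth_bounded_mult:
  "\<lbrakk>smooth_bounded v f; smooth_bounded w g; \<And>x. v x * w x \<ge> 0\<rbrakk>
    \<Longrightarrow> smooth_bounded (\<lambda>x. v x * w x) (\<lambda>x. f x * g x)"
  unfolding smooth_bounded_def by (auto intro: smooth_bounded_upto_mult)

lemma smooth_bounded_mono:
  "\<lbrakk>smooth_bounded v f; \<And>x. 0 \<le> v x; \<And>x. v x \<le> w x\<rbrakk> \<Longrightarrow> smooth_bounded w f"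
  unfolding smooth_bounded_def by (auto intro: smooth_bounded_upto_mono)

lemma smooth_bounded_deriv: "smooth_bounded w f \<Longrightarrow> smooth_bounded w (deriv f)"
  unfolding smooth_bounded_def by (metis smooth_bounded_upto.simps(2))

lemma smooth_bounded_differentiable: "smooth_bounded w f \<Longrightarrow> f differentiable_on UNIV"
  unfolding smooth_bounded_def by (metis smooth_bounded_upto.simps(1))

lemma smooth_bounded_continuous_on: "smooth_bounded w f \<Longrightarrow> continuous_on UNIV f"
  by (rule differentiable_imp_continuous_on[OF smooth_bounded_differentiable])

lemma smooth_bounded_DERIV: "smooth_bounded w f \<Longrightarrow> (f has_real_derivative deriv f x) (at x)"
  by (rule differentiable_on_UNIV_DERIV[OF smooth_bounded_differentiable])

lemma smooth_bounded_weighted_poly_bounded: "smooth_bounded w f \<Longrightarrow> weighted_poly_bounded w f"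
  unfolding smooth_bounded_def by (metis smooth_bounded_upto.simps(1))

lemma smooth_boundedI:
  assumes "\<And>x. (f has_real_derivative f' x) (at x)" "weighted_poly_bounded w f" "smooth_bounded w f'"
  shows "smooth_bounded w f"
proof -
  have "deriv f = f'" by (rule deriv_fun_eqI[OF assms(1)])
  then have "smooth_bounded_upto w m f" for m
    using assms DERIV_imp_differentiable_on_UNIV[OF assms(1)] unfolding smooth_bounded_def
    by (cases m) auto
  then show ?thesis unfolding smooth_bounded_def by blast
qed

lemma decaying_add: "\<lbrakk>decaying f; decaying g\<rbrakk> \<Longrightarrow> decaying (\<lambda>x. f x + g x)"
  by (rule smooth_bounded_add) auto

lemma decaying_diff: "\<lbrakk>decaying f; decaying g\<rbrakk> \<Longrightarrow> decaying (\<lambda>x. f x - g x)"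
  by (rule smooth_bounded_diff) auto

lemma decaying_mult: "\<lbrakk>decaying f; tempered g\<rbrakk> \<Longrightarrow> decaying (\<lambda>x. f x * g x)"
  using smooth_bounded_mult[of "\<lambda>x. exp (- \<bar>x\<bar>)" f "\<lambda>x. 1" g] by simp

lemma decaying_mult_left: "\<lbrakk>tempered g; decaying f\<rbrakk> \<Longrightarrow> decaying (\<lambda>x. g x * f x)"
  using decaying_mult[of f g] by (simp add: mult.commute)

lemma tempered_mult: "\<lbrakk>tempered f; tempered g\<rbrakk> \<Longrightarrow> tempered (\<lambda>x. f x * g x)"
  using smooth_bounded_mult[of "\<lambda>x. 1" f "\<lambda>x. 1" g] by simp

lemma decaying_imp_tempered: "decaying f \<Longrightarrow> tempered f"
  by (erule smooth_bounded_mono) auto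

lemma tempered_const: "tempered (\<lambda>x. c)"
proof -
  have bounded: "weighted_poly_bounded (\<lambda>x. 1) (\<lambda>x. c)" for c
    by (rule weighted_poly_bounded_const_bound[of _ "\<bar>c\<bar>"]) simp
  have "smooth_bounded_upto (\<lambda>x. 1) m (\<lambda>x. c)" for m c
    by (induction m arbitrary: c) (simp_all add: bounded)
  then show ?thesis unfolding smooth_bounded_def by blast
qed

lemma classY_iff_decaying: "classY f \<longleftrightarrow> decaying f"
proof -
  have powr_bound_iff_power_bound:
    "(\<exists>K r. K > 0 \<and> r > 0 \<and> (\<forall>x. \<bar>g x\<bar> \<le> K * (1 + \<bar>x\<bar>) powr r * exp (- \<bar>x\<bar>)))
      \<longleftrightarrow> weighted_poly_bounded (\<lambda>x. exp (- \<bar>x\<bar>)) g" for g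
  proof
    assume "\<exists>K r. K > 0 \<and> r > 0 \<and> (\<forall>x. \<bar>g x\<bar> \<le> K * (1 + \<bar>x\<bar>) powr r * exp (- \<bar>x\<bar>))"
    then obtain K r where K: "K > 0" and bound: "\<And>x. \<bar>g x\<bar> \<le> K * (1 + \<bar>x\<bar>) powr r * exp (- \<bar>x\<bar>)"
      by blast
    have "(1 + \<bar>x\<bar>) powr r \<le> (1 + \<bar>x\<bar>) ^ nat \<lceil>r\<rceil>" for x
    proof -
      have "(1 + \<bar>x\<bar>) powr r \<le> (1 + \<bar>x\<bar>) powr real (nat \<lceil>r\<rceil>)"
        by (rule powr_mono) (auto simp: real_nat_ceiling_ge)
      then show ?thesis by (simp add: powr_realpow)
    qed
    then have "\<bar>g x\<bar> \<le> K * (1 + \<bar>x\<bar>) ^ nat \<lceil>r\<rceil> * exp (- \<bar>x\<bar>)" for x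
      using bound[of x] K by (smt (verit) exp_gt_zero mult_left_mono mult_right_mono)
    then show "weighted_poly_bounded (\<lambda>x. exp (- \<bar>x\<bar>)) g" by (rule weighted_poly_boundedI)
  next
    assume "weighted_poly_bounded (\<lambda>x. exp (- \<bar>x\<bar>)) g"
    then obtain K N where K: "K \<ge> 0" and bound: "\<And>x. \<bar>g x\<bar> \<le> K * (1 + \<bar>x\<bar>) ^ N * exp (- \<bar>x\<bar>)"
      by (rule weighted_poly_boundedE) auto
    have "(1 + \<bar>x\<bar>) ^ N \<le> (1 + \<bar>x\<bar>) powr (real N + 1)" for x
    proof -
      have "(1 + \<bar>x\<bar>) ^ N = (1 + \<bar>x\<bar>) powr real N" by (simp add: powr_realpow)
      also have "\<dots> \<le> (1 + \<bar>x\<bar>) powr (real N + 1)" by (rule powr_mono) auto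
      finally show ?thesis .
    qed
    then have "\<bar>g x\<bar> \<le> (K + 1) * (1 + \<bar>x\<bar>) powr (real N + 1) * exp (- \<bar>x\<bar>)" for x
      using bound[of x] K
      by (smt (verit) exp_gt_zero mult_mono mult_right_mono powr_ge_zero zero_le_power)
    then show "\<exists>K r. K > 0 \<and> r > 0 \<and> (\<forall>x. \<bar>g x\<bar> \<le> K * (1 + \<bar>x\<bar>) powr r * exp (- \<bar>x\<bar>))"
      using K by (intro exI[of _ "K + 1"] exI[of _ "real N + 1"]) auto
  qed
  show ?thesis
    unfolding classY_def smooth_bounded_iff powr_bound_iff_power_bound differentiable_on_def by blast
qed

lemma abs_poly_le_sum_abs_coeff:
  "\<bar>poly P (t::real)\<bar> \<le> (\<Sum>i\<le>degree P. \<bar>coeff P i\<bar>) * (1 + \<bar>t\<bar>) ^ degree P"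
proof -
  have "\<bar>poly P t\<bar> \<le> (\<Sum>i\<le>degree P. \<bar>coeff P i * t ^ i\<bar>)"
    unfolding poly_altdef by (rule sum_abs)
  also have "\<dots> \<le> (\<Sum>i\<le>degree P. \<bar>coeff P i\<bar> * (1 + \<bar>t\<bar>) ^ degree P)"
  proof (rule sum_mono)
    fix i assume i: "i \<in> {..degree P}"
    have "\<bar>t\<bar> ^ i \<le> (1 + \<bar>t\<bar>) ^ i" by (rule power_mono) auto
    also have "\<dots> \<le> (1 + \<bar>t\<bar>) ^ degree P" using i by (intro power_increasing) auto
    finally show "\<bar>coeff P i * t ^ i\<bar> \<le> \<bar>coeff P i\<bar> * (1 + \<bar>t\<bar>) ^ degree P"
      by (simp add: abs_mult power_abs mult_left_mono)
  qed
  finally show ?thesis by (simp add: sum_distrib_right)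
qed

lemma tempered_poly: "tempered (poly (P :: real poly))"
proof -
  have "smooth_bounded_upto (\<lambda>x. 1) m (poly P)" for m
  proof (induction m arbitrary: P)
    case 0
    show ?case using abs_poly_le_sum_abs_coeff[of P]
      by (auto intro!: weighted_poly_boundedI DERIV_imp_differentiable_on_UNIV poly_DERIV)
  next
    case (Suc m)
    then show ?case using abs_poly_le_sum_abs_coeff[of P]
      by (auto intro!: weighted_poly_boundedI DERIV_imp_differentiable_on_UNIV poly_DERIV
               simp: deriv_fun_eqI[OF poly_DERIV])
  qed
  then show ?thesis unfolding smooth_bounded_def by blast
qed

lemma tempered_ident: "tempered (\<lambda>x. x)"
proof -
  have "poly [:0, 1:] = (\<lambda>x::real. x)" by (rule ext) simp
  then show ?thesis using tempered_poly[of "[:0, 1:]"] by simp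
qed

lemma DERIV_mult_ident:
  "(f has_real_derivative D) (at x) \<Longrightarrow> ((\<lambda>x. x * f x) has_real_derivative f x + x * D) (at x)"
  using DERIV_mult[OF DERIV_ident] by (simp add: algebra_simps)

text \<open>Since \<open>\<psi>'\<close> and \<open>E'/E\<close> are polynomials in \<open>\<psi>\<close>, the products \<open>E \<cdot> R(\<psi>)\<close> with polynomial \<open>R\<close>
  form a family closed under differentiation.\<close>

lemma riccati_family_DERIV:
  assumes \<psi>: "\<And>x. (\<psi> has_real_derivative k * (1 - \<psi> x ^ 2)) (at x)"
    and E: "\<And>x. (E has_real_derivative E x * poly e (\<psi> x)) (at x)"
  shows "((\<lambda>x. E x * poly R (\<psi> x)) has_real_derivative
            E x * poly (e * R + pderiv R * [:k, 0, -k:]) (\<psi> x)) (at x)"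
proof -
  have "((\<lambda>x. E x * poly R (\<psi> x)) has_real_derivative
     E x * poly e (\<psi> x) * poly R (\<psi> x) + poly (pderiv R) (\<psi> x) * (k * (1 - \<psi> x ^ 2)) * E x) (at x)"
    by (rule DERIV_mult[OF E DERIV_chain2[OF poly_DERIV \<psi>]])
  then show ?thesis by (simp add: algebra_simps power2_eq_square)
qed

lemma riccati_family_smooth_bounded:
  assumes \<psi>: "\<And>x. (\<psi> has_real_derivative k * (1 - \<psi> x ^ 2)) (at x)" "\<And>x. \<bar>\<psi> x\<bar> \<le> 1"
    and E: "\<And>x. (E has_real_derivative E x * poly e (\<psi> x)) (at x)" "weighted_poly_bounded w E"
  shows "smooth_bounded w (\<lambda>x. E x * poly R (\<psi> x))"
proof -
  have bounded: "weighted_poly_bounded w (\<lambda>x. E x * poly R (\<psi> x))" for R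
  proof -
    have "\<bar>poly R (\<psi> x)\<bar> \<le> (\<Sum>i\<le>degree R. \<bar>coeff R i\<bar>) * 2 ^ degree R" for x
    proof -
      have "(1 + \<bar>\<psi> x\<bar>) ^ degree R \<le> 2 ^ degree R"
        using \<psi>(2)[of x] by (intro power_mono) auto
      then have "(\<Sum>i\<le>degree R. \<bar>coeff R i\<bar>) * (1 + \<bar>\<psi> x\<bar>) ^ degree R
          \<le> (\<Sum>i\<le>degree R. \<bar>coeff R i\<bar>) * 2 ^ degree R"
        by (intro mult_left_mono) (auto intro: sum_nonneg)
      then show ?thesis using abs_poly_le_sum_abs_coeff[of R "\<psi> x"] by linarith
    qed
    then have "weighted_poly_bounded (\<lambda>x. 1) (\<lambda>x. poly R (\<psi> x))"
      by (rule weighted_poly_bounded_const_bound)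
    from weighted_poly_bounded_mult[OF E(2) this] show ?thesis by simp
  qed
  have "smooth_bounded_upto w m (\<lambda>x. E x * poly R (\<psi> x))" for m
  proof (induction m arbitrary: R)
    case (Suc m)
    then show ?case
      using bounded DERIV_imp_differentiable_on_UNIV[OF riccati_family_DERIV[OF \<psi>(1) E(1)]]
      by (simp only: smooth_bounded_upto.simps deriv_fun_eqI[OF riccati_family_DERIV[OF \<psi>(1) E(1)]])
  qed (use bounded DERIV_imp_differentiable_on_UNIV[OF riccati_family_DERIV[OF \<psi>(1) E(1)]] in simp)
  then show ?thesis unfolding smooth_bounded_def by blast
qed

section \<open>Parity and primitives\<close>

lemma even_funD: "even_fun f \<Longrightarrow> f (- x) = f x"
  unfolding even_fun_def by blast

lemma odd_funD: "odd_fun f \<Longrightarrow> f (- x) = - f x"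
  unfolding odd_fun_def by blast

lemma DERIV_reflect:
  assumes "(f has_real_derivative d) (at (- x))"
  shows "((\<lambda>x. f (- x)) has_real_derivative - d) (at x)"
proof -
  have "((\<lambda>x. f (uminus x)) has_real_derivative d * (- 1)) (at x)"
    by (rule DERIV_chain2[where g = uminus and f = f]) (use assms in \<open>auto intro: derivative_eq_intros\<close>)
  then show ?thesis by simp
qed

lemma even_fun_antiderivative:
  assumes G: "\<And>x. (G has_real_derivative g x) (at x)" and g: "odd_fun g"
  shows "even_fun G"
proof -
  have "((\<lambda>x. G (- x) - G x) has_real_derivative 0) (at x)" for x
    using DERIV_diff[OF DERIV_reflect[OF G[of "- x"]] G[of x]] odd_funD[OF g, of x] by simp
  from DERIV_isconst_all[OF allI[OF this], of _ 0] show ?thesis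
    unfolding even_fun_def by simp
qed

lemma odd_fun_antiderivative:
  assumes G: "\<And>x. (G has_real_derivative g x) (at x)" and g: "even_fun g" and G0: "G 0 = 0"
  shows "odd_fun G"
proof -
  have "((\<lambda>x. G (- x) + G x) has_real_derivative 0) (at x)" for x
    using DERIV_add[OF DERIV_reflect[OF G[of "- x"]] G[of x]] even_funD[OF g, of x] by simp
  then have "G (- x) + G x = G 0 + G 0" for x
    using DERIV_isconst_all[of "\<lambda>x. G (- x) + G x" x 0] by simp
  then show ?thesis unfolding odd_fun_def using G0 by (simp add: eq_neg_iff_add_eq_0)
qed

lemma odd_fun_deriv:
  assumes "f differentiable_on UNIV" "even_fun f"
  shows "odd_fun (deriv f)"
  unfolding odd_fun_def
proof
  fix x
  have "((\<lambda>x. f (- x)) has_real_derivative - deriv f (- x)) (at x)"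
    by (intro DERIV_reflect differentiable_on_UNIV_DERIV assms)
  then have "(f has_real_derivative - deriv f (- x)) (at x)"
    using assms(2) unfolding even_fun_def by simp
  with differentiable_on_UNIV_DERIV[OF assms(1), of x] show "deriv f (- x) = - deriv f x"
    using DERIV_unique by fastforce
qed

lemma even_fun_deriv:
  assumes "f differentiable_on UNIV" "odd_fun f"
  shows "even_fun (deriv f)"
  unfolding even_fun_def
proof
  fix x
  have "((\<lambda>x. - f (- x)) has_real_derivative deriv f (- x)) (at x)"
    using DERIV_minus[OF DERIV_reflect[OF differentiable_on_UNIV_DERIV[OF assms(1)]]] by simp
  then have "(f has_real_derivative deriv f (- x)) (at x)"
    using assms(2) unfolding odd_fun_def by simp
  with differentiable_on_UNIV_DERIV[OF assms(1), of x] show "deriv f (- x) = deriv f x"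
    using DERIV_unique by fastforce
qed

lemma exists_antiderivative:
  assumes "continuous_on UNIV g"
  obtains G where "\<And>x. (G has_real_derivative g x) (at x)" "G 0 = 0"
proof -
  have "\<exists>F. \<forall>x :: real. -\<infinity> < x \<longrightarrow> x < \<infinity> \<longrightarrow> (F has_vector_derivative g x) (at x)"
    by (rule einterval_antiderivative) (use assms in \<open>auto simp: continuous_on_eq_continuous_at\<close>)
  then obtain F where F: "\<And>x. (F has_real_derivative g x) (at x)"
    by (auto simp: has_real_derivative_iff_has_vector_derivative)
  show thesis by (rule that[of "\<lambda>x. F x - F 0"]) (auto intro!: derivative_eq_intros F)
qed

lemma DERIV_abs_diff_le:
  assumes G: "\<And>t. (G has_real_derivative g t) (at t)" and g: "\<And>t. \<bar>t\<bar> \<le> \<bar>x\<bar> \<Longrightarrow> \<bar>g t\<bar> \<le> M"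
  shows "\<bar>G x - G 0\<bar> \<le> M * \<bar>x\<bar>"
  using field_differentiable_bound[of "cball 0 \<bar>x\<bar>" G g M x 0] G g
  by (auto simp: has_field_derivative_at_within dist_real_def)

lemma poly_exp_tendsto_zero: "a > 0 \<Longrightarrow> ((\<lambda>t::real. (1 + t) ^ N * exp (- a * t)) \<longlongrightarrow> 0) at_top"
  by real_asymp

text \<open>A majorant \<open>m\<close> of the tail integral \<open>\<integral>\<^sub>t\<^sup>\<infinity> (1 + s)\<^sup>N e\<^sup>-\<^sup>a\<^sup>s ds\<close>, obtained by repeated integration by parts.\<close>

lemma tail_majorant:
  assumes a: "a > (0::real)"
  obtains m C where "\<And>t. (m has_real_derivative - ((1 + t) ^ N * exp (- a * t))) (at t)"
    "\<And>t. t \<ge> 0 \<Longrightarrow> 0 \<le> m t \<and> m t \<le> C * (1 + t) ^ N * exp (- a * t)"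
proof -
  have "\<exists>m C. (\<forall>t. (m has_real_derivative - ((1 + t) ^ N * exp (- a * t))) (at t)) \<and>
      (\<forall>t\<ge>0. 0 \<le> m t \<and> m t \<le> C * (1 + t) ^ N * exp (- a * t))"
  proof (induction N)
    case 0
    show ?case
      by (rule exI[of _ "\<lambda>t. exp (- a * t) / a"], rule exI[of _ "1 / a"])
         (use a in \<open>auto intro!: derivative_eq_intros simp: field_simps\<close>)
  next
    case (Suc N)
    then obtain m C where m: "\<And>t. (m has_real_derivative - ((1 + t) ^ N * exp (- a * t))) (at t)"
      "\<And>t. t \<ge> 0 \<Longrightarrow> 0 \<le> m t \<and> m t \<le> C * (1 + t) ^ N * exp (- a * t)" by blast
    define m' where "m' t = ((1 + t) ^ Suc N * exp (- a * t) + real (Suc N) * m t) / a" for t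
    have "(m' has_real_derivative - ((1 + t) ^ Suc N * exp (- a * t))) (at t)" for t
      unfolding m'_def using a
      by (auto intro!: derivative_eq_intros m(1) simp: field_simps simp del: power_Suc)
    moreover have "0 \<le> m' t \<and> m' t \<le> ((1 + real (Suc N) * \<bar>C\<bar>) / a) * (1 + t) ^ Suc N * exp (- a * t)"
      if t: "t \<ge> 0" for t
    proof -
      have "m t \<le> \<bar>C\<bar> * (1 + t) ^ N * exp (- a * t)"
        using m(2)[OF t] t by (smt (verit) exp_gt_zero mult_right_mono zero_le_power)
      also have "\<dots> \<le> \<bar>C\<bar> * (1 + t) ^ Suc N * exp (- a * t)"
        using t by (intro mult_right_mono mult_left_mono power_increasing) auto
      finally have "real (Suc N) * m t \<le> real (Suc N) * (\<bar>C\<bar> * (1 + t) ^ Suc N * exp (- a * t))"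
        by (rule mult_left_mono) simp
      then have "(1 + t) ^ Suc N * exp (- a * t) + real (Suc N) * m t
          \<le> (1 + real (Suc N) * \<bar>C\<bar>) * (1 + t) ^ Suc N * exp (- a * t)"
        by (simp add: algebra_simps del: power_Suc of_nat_Suc)
      then have "m' t \<le> ((1 + real (Suc N) * \<bar>C\<bar>) * (1 + t) ^ Suc N * exp (- a * t)) / a"
        unfolding m'_def using a by (simp add: divide_right_mono)
      moreover have "0 \<le> m' t" unfolding m'_def using a m(2)[OF t] t by auto
      ultimately show ?thesis by (simp add: field_simps)
    qed
    ultimately show ?case by blast
  qed
  then show thesis using that by blast
qed

lemma DERIV_tail_estimate:
  assumes G: "\<And>t. (G has_real_derivative g t) (at t)"
    and g: "\<And>t. t \<ge> 0 \<Longrightarrow> \<bar>g t\<bar> \<le> K * (1 + t) ^ N * exp (- a * t)" and a: "a > 0"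
    and m: "\<And>t. (m has_real_derivative - ((1 + t) ^ N * exp (- a * t))) (at t)"
    and xy: "0 \<le> x" "x \<le> y"
  shows "\<bar>G y - G x\<bar> \<le> K * (m x - m y)"
proof -
  have "(\<lambda>t. G t + K * m t) y \<le> (\<lambda>t. G t + K * m t) x"
  proof (rule DERIV_nonpos_imp_nonincreasing[OF xy(2)])
    fix t assume "x \<le> t" "t \<le> y"
    then have "g t + K * - ((1 + t) ^ N * exp (- a * t)) \<le> 0" using g[of t] xy by (simp add: abs_le_iff)
    then show "\<exists>d. ((\<lambda>t. G t + K * m t) has_real_derivative d) (at t) \<and> d \<le> 0"
      using DERIV_add[OF G DERIV_cmult[OF m]] by blast
  qed
  moreover have "(\<lambda>t. G t - K * m t) x \<le> (\<lambda>t. G t - K * m t) y"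
  proof (rule DERIV_nonneg_imp_nondecreasing[OF xy(2)])
    fix t assume "x \<le> t" "t \<le> y"
    then have "g t - K * - ((1 + t) ^ N * exp (- a * t)) \<ge> 0" using g[of t] xy by (simp add: abs_le_iff)
    then show "\<exists>d. ((\<lambda>t. G t - K * m t) has_real_derivative d) (at t) \<and> d \<ge> 0"
      using DERIV_diff[OF G DERIV_cmult[OF m]] by blast
  qed
  ultimately show ?thesis by (simp add: abs_le_iff algebra_simps)
qed

lemma limit_at_top_of_Cauchy_majorant:
  fixes G M :: "real \<Rightarrow> real"
  assumes step: "\<And>x y. 0 \<le> x \<Longrightarrow> x \<le> y \<Longrightarrow> \<bar>G y - G x\<bar> \<le> M x" and M: "(M \<longlongrightarrow> 0) at_top"
  obtains L where "(G \<longlongrightarrow> L) at_top" "\<forall>x\<ge>0. \<bar>G x - L\<bar> \<le> M x"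
proof -
  have "Cauchy (\<lambda>n. G (real n))"
  proof (rule metric_CauchyI)
    fix e :: real assume "e > 0"
    then obtain T where T: "\<And>x. x \<ge> T \<Longrightarrow> \<bar>M x\<bar> < e"
      using M unfolding tendsto_iff by (auto simp: eventually_at_top_linorder)
    have "dist (G (real n)) (G (real n')) < e" if "n \<ge> nat \<lceil>max T 0\<rceil>" "n' \<ge> nat \<lceil>max T 0\<rceil>" for n n'
    proof -
      have T': "real n \<ge> T" "real n' \<ge> T" using that by linarith+
      show ?thesis
      proof (cases "n \<le> n'")
        case True
        then show ?thesis
          using step[of "real n" "real n'"] T[OF T'(1)] by (simp add: dist_real_def abs_minus_commute)
      next
        case False
        then show ?thesis using step[of "real n'" "real n"] T[OF T'(2)] by (simp add: dist_real_def)
      qed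
    qed
    then show "\<exists>N. \<forall>n\<ge>N. \<forall>n'\<ge>N. dist (G (real n)) (G (real n')) < e" by blast
  qed
  then obtain L where L: "(\<lambda>n. G (real n)) \<longlonglongrightarrow> L" using Cauchy_convergent_iff convergent_def by blast
  have near: "\<bar>G x - L\<bar> \<le> M x" if x: "x \<ge> 0" for x
  proof -
    have "\<bar>L - G x\<bar> \<le> M x"
    proof (rule LIMSEQ_le_const2)
      show "(\<lambda>n. \<bar>G (real n) - G x\<bar>) \<longlonglongrightarrow> \<bar>L - G x\<bar>" by (intro tendsto_intros L)
      show "\<exists>N. \<forall>n\<ge>N. \<bar>G (real n) - G x\<bar> \<le> M x"
        using step x by (intro exI[of _ "nat \<lceil>x\<rceil>"]) (auto simp: nat_ceiling_le_eq)
    qed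
    then show ?thesis by (simp add: abs_minus_commute)
  qed
  have "eventually (\<lambda>x. norm (G x - L) \<le> M x) at_top"
    using eventually_ge_at_top[of 0] by eventually_elim (use near in simp)
  then have "((\<lambda>x. G x - L) \<longlongrightarrow> 0) at_top" by (rule Lim_null_comparison[OF _ M])
  then have "(G \<longlongrightarrow> L) at_top" by (subst Lim_null)
  then show thesis using near by (intro that) auto
qed

lemma DERIV_limit_at_top:
  assumes G: "\<And>t. (G has_real_derivative g t) (at t)"
    and g: "\<And>t. t \<ge> 0 \<Longrightarrow> \<bar>g t\<bar> \<le> K * (1 + t) ^ N * exp (- a * t)" and a: "a > 0"
  obtains L C where "(G \<longlongrightarrow> L) at_top" "\<And>x. x \<ge> 0 \<Longrightarrow> \<bar>G x - L\<bar> \<le> C * (1 + x) ^ N * exp (- a * x)"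
proof -
  obtain m C where m: "\<And>t. (m has_real_derivative - ((1 + t) ^ N * exp (- a * t))) (at t)"
    "\<And>t. t \<ge> 0 \<Longrightarrow> 0 \<le> m t \<and> m t \<le> C * (1 + t) ^ N * exp (- a * t)"
    using tail_majorant[OF a] by blast
  have "\<bar>g 0\<bar> \<le> K" using g[of 0] by simp
  then have K: "K \<ge> 0" by (meson abs_ge_zero order_trans)
  have step: "\<bar>G y - G x\<bar> \<le> K * m x" if "0 \<le> x" "x \<le> y" for x y
  proof -
    have "K * (m x - m y) \<le> K * m x" using K m(2)[of y] that by (intro mult_left_mono) auto
    then show ?thesis using DERIV_tail_estimate[OF G g a m(1) that] by linarith
  qed
  have m0: "(m \<longlongrightarrow> 0) at_top"
  proof (rule Lim_null_comparison)
    show "eventually (\<lambda>x. norm (m x) \<le> C * ((1 + x) ^ N * exp (- a * x))) at_top"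
      using eventually_ge_at_top[of 0] by eventually_elim (use m(2) in \<open>auto simp: mult.assoc\<close>)
    show "((\<lambda>x. C * ((1 + x) ^ N * exp (- a * x))) \<longlongrightarrow> 0) at_top"
      using tendsto_mult_right_zero[OF poly_exp_tendsto_zero[OF a]] by simp
  qed
  obtain L where L: "(G \<longlongrightarrow> L) at_top" and near: "\<forall>x\<ge>0. \<bar>G x - L\<bar> \<le> K * m x"
    by (rule limit_at_top_of_Cauchy_majorant[OF step tendsto_mult_right_zero[OF m0]])
  have "\<bar>G x - L\<bar> \<le> (K * C) * (1 + x) ^ N * exp (- a * x)" if "x \<ge> 0" for x
  proof -
    have "K * m x \<le> K * (C * (1 + x) ^ N * exp (- a * x))"
      using m(2)[OF that] K by (intro mult_left_mono) auto
    moreover have "\<bar>G x - L\<bar> \<le> K * m x" using near that by blast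
    ultimately show ?thesis by (simp add: mult.assoc)
  qed
  with L show thesis by (rule that)
qed

lemma DERIV_limits_weighted_poly_bounded:
  assumes G: "\<And>x. (G has_real_derivative g x) (at x)"
    and g: "weighted_poly_bounded (\<lambda>x. exp (- a * \<bar>x\<bar>)) g" and a: "a > (0::real)"
  obtains Lp Lm where "(G \<longlongrightarrow> Lp) at_top" "(G \<longlongrightarrow> Lm) at_bot"
    "weighted_poly_bounded (\<lambda>x. exp (- a * \<bar>x\<bar>)) (\<lambda>x. G x - (if x \<ge> 0 then Lp else Lm))"
proof -
  obtain K N where bound: "\<And>x. \<bar>g x\<bar> \<le> K * (1 + \<bar>x\<bar>) ^ N * exp (- a * \<bar>x\<bar>)"
    using g unfolding weighted_poly_bounded_def by blast
  obtain Lp C1 where Lp: "(G \<longlongrightarrow> Lp) at_top"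
    and C1: "\<And>x. x \<ge> 0 \<Longrightarrow> \<bar>G x - Lp\<bar> \<le> C1 * (1 + x) ^ N * exp (- a * x)"
    using DERIV_limit_at_top[OF G _ a, of K N] bound by (metis abs_of_nonneg)
  have reflected: "((\<lambda>t. - G (- t)) has_real_derivative g (- t)) (at t)" for t
    using DERIV_minus[OF DERIV_reflect[OF G[of "- t"]]] by simp
  obtain Lh C2 where Lh: "((\<lambda>t. - G (- t)) \<longlongrightarrow> Lh) at_top"
    and C2: "\<And>x. x \<ge> 0 \<Longrightarrow> \<bar>- G (- x) - Lh\<bar> \<le> C2 * (1 + x) ^ N * exp (- a * x)"
    using DERIV_limit_at_top[OF reflected _ a, of K N] bound by (metis abs_minus abs_of_nonneg)
  show thesis
  proof (rule that[OF Lp, of "- Lh"])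
    show "(G \<longlongrightarrow> - Lh) at_bot"
      unfolding filterlim_at_bot_mirror using tendsto_minus[OF Lh] by simp
    have "\<bar>G x - (if x \<ge> 0 then Lp else - Lh)\<bar> \<le> max C1 C2 * (1 + \<bar>x\<bar>) ^ N * exp (- a * \<bar>x\<bar>)" for x
    proof -
      define w where "w = (1 + \<bar>x\<bar>) ^ N * exp (- a * \<bar>x\<bar>)"
      have "0 \<le> w" unfolding w_def by simp
      then have "C1 * w \<le> max C1 C2 * w" "C2 * w \<le> max C1 C2 * w"
        by (simp_all add: mult_right_mono)
      moreover have "\<bar>G x - (if x \<ge> 0 then Lp else - Lh)\<bar> \<le> (if x \<ge> 0 then C1 * w else C2 * w)"
      proof (cases "x \<ge> 0")
        case True
        then show ?thesis using C1[OF True] unfolding w_def by (simp add: mult.assoc)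
      next
        case False
        then have "\<bar>G x - - Lh\<bar> = \<bar>- G (- \<bar>x\<bar>) - Lh\<bar>" by (simp add: abs_minus_commute)
        then show ?thesis using False C2[of "\<bar>x\<bar>"] unfolding w_def by (simp add: mult.assoc)
      qed
      ultimately have "\<bar>G x - (if x \<ge> 0 then Lp else - Lh)\<bar> \<le> max C1 C2 * w"
        by (auto split: if_splits)
      then show ?thesis unfolding w_def by (simp add: mult.assoc)
    qed
    then show "weighted_poly_bounded (\<lambda>x. exp (- a * \<bar>x\<bar>)) (\<lambda>x. G x - (if x \<ge> 0 then Lp else - Lh))"
      by (rule weighted_poly_boundedI)
  qed
qed

lemma decaying_antiderivative_limits:
  assumes "decaying g"
  obtains G Lp Lm where "\<And>x. (G has_real_derivative g x) (at x)" "G 0 = 0"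
    "(G \<longlongrightarrow> Lp) at_top" "(G \<longlongrightarrow> Lm) at_bot"
    "weighted_poly_bounded (\<lambda>x. exp (- \<bar>x\<bar>)) (\<lambda>x. G x - (if x \<ge> 0 then Lp else Lm))"
proof -
  obtain G where G: "\<And>x. (G has_real_derivative g x) (at x)" "G 0 = 0"
    by (rule exists_antiderivative[OF smooth_bounded_continuous_on[OF assms]]) blast
  have "weighted_poly_bounded (\<lambda>x. exp (- 1 * \<bar>x\<bar>)) g"
    using smooth_bounded_weighted_poly_bounded[OF assms] by simp
  then obtain Lp Lm where "(G \<longlongrightarrow> Lp) at_top" "(G \<longlongrightarrow> Lm) at_bot"
    "weighted_poly_bounded (\<lambda>x. exp (- 1 * \<bar>x\<bar>)) (\<lambda>x. G x - (if x \<ge> 0 then Lp else Lm))"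
    by (rule DERIV_limits_weighted_poly_bounded[OF G(1)]) simp
  then show thesis using that[OF G] by simp
qed

lemma weighted_poly_bounded_exp_tendsto_zero:
  assumes "weighted_poly_bounded (\<lambda>x. exp (- \<bar>x\<bar>)) f"
  shows "(f \<longlongrightarrow> 0) at_top" "(f \<longlongrightarrow> 0) at_bot"
proof -
  obtain K N where bound: "\<And>x. \<bar>f x\<bar> \<le> K * (1 + \<bar>x\<bar>) ^ N * exp (- \<bar>x\<bar>)"
    using assms unfolding weighted_poly_bounded_def by blast
  have majorant: "((\<lambda>x. K * ((1 + x) ^ N * exp (- 1 * x))) \<longlongrightarrow> 0) at_top"
    using tendsto_mult_right_zero[OF poly_exp_tendsto_zero[of 1 N]] by simp
  have "eventually (\<lambda>x. norm (f x) \<le> K * ((1 + x) ^ N * exp (- 1 * x))) at_top"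
  proof (rule eventually_mono[OF eventually_ge_at_top[of 0]])
    fix x :: real assume "0 \<le> x"
    then show "norm (f x) \<le> K * ((1 + x) ^ N * exp (- 1 * x))" using bound[of x] by (simp add: mult.assoc)
  qed
  then show "(f \<longlongrightarrow> 0) at_top" by (rule Lim_null_comparison[OF _ majorant])
  have "eventually (\<lambda>x. norm (f (- x)) \<le> K * ((1 + x) ^ N * exp (- 1 * x))) at_top"
  proof (rule eventually_mono[OF eventually_ge_at_top[of 0]])
    fix x :: real assume "0 \<le> x"
    then show "norm (f (- x)) \<le> K * ((1 + x) ^ N * exp (- 1 * x))"
      using bound[of "- x"] by (simp add: mult.assoc)
  qed
  then have "((\<lambda>x. f (- x)) \<longlongrightarrow> 0) at_top" by (rule Lim_null_comparison[OF _ majorant])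
  then show "(f \<longlongrightarrow> 0) at_bot" unfolding filterlim_at_bot_mirror .
qed

definition has_improper_integral :: "(real \<Rightarrow> real) \<Rightarrow> real \<Rightarrow> bool" where
  "has_improper_integral g I \<longleftrightarrow> (\<exists>G Lp Lm. (\<forall>x. (G has_real_derivative g x) (at x)) \<and>
     (G \<longlongrightarrow> Lp) at_top \<and> (G \<longlongrightarrow> Lm) at_bot \<and> I = Lp - Lm)"

lemma has_improper_integralI:
  "\<lbrakk>\<And>x. (G has_real_derivative g x) (at x); (G \<longlongrightarrow> Lp) at_top; (G \<longlongrightarrow> Lm) at_bot\<rbrakk>
    \<Longrightarrow> has_improper_integral g (Lp - Lm)"
  unfolding has_improper_integral_def by blast

lemma has_improper_integral_limits:
  assumes "has_improper_integral g I" and G: "\<And>x. (G has_real_derivative g x) (at x)"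
    and "(G \<longlongrightarrow> Lp) at_top" "(G \<longlongrightarrow> Lm) at_bot"
  shows "I = Lp - Lm"
proof -
  obtain H Hp Hm where H: "\<And>x. (H has_real_derivative g x) (at x)" "(H \<longlongrightarrow> Hp) at_top"
    "(H \<longlongrightarrow> Hm) at_bot" "I = Hp - Hm"
    using assms(1) unfolding has_improper_integral_def by blast
  have "((\<lambda>x. G x - H x) has_real_derivative 0) (at x)" for x
    using DERIV_diff[OF G H(1)] by simp
  then have "G x - H x = G 0 - H 0" for x
    using DERIV_isconst_all[of "\<lambda>x. G x - H x" x 0] by blast
  then have const: "(\<lambda>x. G x - H x) = (\<lambda>x. G 0 - H 0)" by (rule ext)
  have "((\<lambda>x. G x - H x) \<longlongrightarrow> Lp - Hp) at_top" "((\<lambda>x. G x - H x) \<longlongrightarrow> Lm - Hm) at_bot"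
    using assms(3,4) H(2,3) by (auto intro: tendsto_diff)
  then have "Lp - Hp = G 0 - H 0" "Lm - Hm = G 0 - H 0"
    unfolding const by (simp_all add: tendsto_const_iff)
  then show ?thesis using H(4) by simp
qed

lemma has_improper_integral_add_cmult:
  assumes "has_improper_integral f I" "has_improper_integral g J"
  shows "has_improper_integral (\<lambda>x. f x + c * g x) (I + c * J)"
proof -
  obtain F Fp Fm where F: "\<And>x. (F has_real_derivative f x) (at x)" "(F \<longlongrightarrow> Fp) at_top"
    "(F \<longlongrightarrow> Fm) at_bot" "I = Fp - Fm"
    using assms(1) unfolding has_improper_integral_def by blast
  obtain G Gp Gm where G: "\<And>x. (G has_real_derivative g x) (at x)" "(G \<longlongrightarrow> Gp) at_top"
    "(G \<longlongrightarrow> Gm) at_bot" "J = Gp - Gm"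
    using assms(2) unfolding has_improper_integral_def by blast
  have "has_improper_integral (\<lambda>x. f x + c * g x) ((Fp + c * Gp) - (Fm + c * Gm))"
    by (rule has_improper_integralI[of "\<lambda>x. F x + c * G x"])
       (auto intro!: derivative_eq_intros tendsto_intros F G)
  moreover have "(Fp + c * Gp) - (Fm + c * Gm) = I + c * J" unfolding F(4) G(4) by (simp add: algebra_simps)
  ultimately show ?thesis by simp
qed

lemma decaying_has_improper_integral:
  assumes "decaying g"
  obtains I where "has_improper_integral g I"
proof -
  obtain G Lp Lm where "\<And>x. (G has_real_derivative g x) (at x)" "(G \<longlongrightarrow> Lp) at_top" "(G \<longlongrightarrow> Lm) at_bot"
    by (rule decaying_antiderivative_limits[OF assms]) blast
  then show thesis using that has_improper_integralI by blast
qed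

lemma odd_decaying_has_improper_integral_0:
  assumes g: "decaying g" "odd_fun g"
  shows "has_improper_integral g 0"
proof -
  obtain G Lp Lm where G: "\<And>x. (G has_real_derivative g x) (at x)"
    and lim: "(G \<longlongrightarrow> Lp) at_top" "(G \<longlongrightarrow> Lm) at_bot"
    by (rule decaying_antiderivative_limits[OF g(1)]) blast
  have "((\<lambda>x. G (- x)) \<longlongrightarrow> Lm) at_top" using lim(2) unfolding filterlim_at_bot_mirror .
  then have "(G \<longlongrightarrow> Lm) at_top" using even_fun_antiderivative[OF G g(2)] by (simp add: even_fun_def)
  then have "Lm = Lp" using lim(1) by (rule tendsto_unique[OF trivial_limit_at_top_linorder])
  then show ?thesis using has_improper_integralI[OF G lim] by simp
qed

lemma decaying_antiderivative_of_odd: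
  assumes g: "decaying g" "odd_fun g"
  obtains w where "decaying w" "even_fun w" "\<And>x. (w has_real_derivative g x) (at x)"
proof -
  obtain G Lp Lm where G: "\<And>x. (G has_real_derivative g x) (at x)"
    and lim: "(G \<longlongrightarrow> Lp) at_top" "(G \<longlongrightarrow> Lm) at_bot"
    and near: "weighted_poly_bounded (\<lambda>x. exp (- \<bar>x\<bar>)) (\<lambda>x. G x - (if x \<ge> 0 then Lp else Lm))"
    by (rule decaying_antiderivative_limits[OF g(1)]) blast
  have G_even: "even_fun G" by (rule even_fun_antiderivative[OF G g(2)])
  have "((\<lambda>x. G (- x)) \<longlongrightarrow> Lm) at_top" using lim(2) unfolding filterlim_at_bot_mirror .
  then have "(G \<longlongrightarrow> Lm) at_top" using G_even by (simp add: even_fun_def)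
  then have L: "Lm = Lp" using lim(1) by (rule tendsto_unique[OF trivial_limit_at_top_linorder])
  have w: "((\<lambda>x. G x - Lp) has_real_derivative g x) (at x)" for x
    using DERIV_diff[OF G DERIV_const] by simp
  show thesis
  proof (rule that[OF _ _ w])
    show "decaying (\<lambda>x. G x - Lp)"
      using near L by (intro smooth_boundedI[OF w _ g(1)]) (simp add: if_distrib cong: if_cong)
    show "even_fun (\<lambda>x. G x - Lp)" using G_even by (simp add: even_fun_def)
  qed
qed

lemma weighted_poly_bounded_antiderivative:
  assumes G: "\<And>x. (G has_real_derivative g x) (at x)" and g: "weighted_poly_bounded (\<lambda>x. 1) g"
  shows "weighted_poly_bounded (\<lambda>x. 1) (\<lambda>x. G x - G 0)"
proof -
  obtain K N where K: "K \<ge> 0" "\<And>x. \<bar>g x\<bar> \<le> K * (1 + \<bar>x\<bar>) ^ N * 1"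
    by (rule weighted_poly_boundedE[OF g]) auto
  have "\<bar>G x - G 0\<bar> \<le> K * (1 + \<bar>x\<bar>) ^ Suc N * 1" for x
  proof -
    have "\<bar>G x - G 0\<bar> \<le> (K * (1 + \<bar>x\<bar>) ^ N) * \<bar>x\<bar>"
    proof (rule DERIV_abs_diff_le[OF G])
      fix t :: real assume "\<bar>t\<bar> \<le> \<bar>x\<bar>"
      then have "K * (1 + \<bar>t\<bar>) ^ N \<le> K * (1 + \<bar>x\<bar>) ^ N"
        using K(1) by (intro mult_left_mono power_mono) auto
      then show "\<bar>g t\<bar> \<le> K * (1 + \<bar>x\<bar>) ^ N" using K(2)[of t] by simp
    qed
    also have "\<dots> \<le> (K * (1 + \<bar>x\<bar>) ^ N) * (1 + \<bar>x\<bar>)" using K(1) by (intro mult_left_mono) auto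
    finally show ?thesis by (simp add: algebra_simps)
  qed
  then show ?thesis by (rule weighted_poly_boundedI)
qed

lemma smooth_bounded_second_order_ODE:
  assumes du: "\<And>x. (u has_real_derivative u1 x) (at x)"
    and du1: "\<And>x. (u1 has_real_derivative u x * W x - h x) (at x)"
    and bounded: "weighted_poly_bounded w u" "weighted_poly_bounded w u1"
    and h: "smooth_bounded w h" and W: "tempered W" and w: "\<And>x. w x \<ge> 0"
  shows "smooth_bounded w u"
proof -
  have D: "deriv u = u1" by (rule deriv_fun_eqI[OF du])
  have D1: "deriv u1 = (\<lambda>x. u x * W x - h x)" by (rule deriv_fun_eqI[OF du1])
  have "smooth_bounded_upto w m u \<and> smooth_bounded_upto w m u1" for m
  proof (induction m)
    case 0
    then show ?case
      using bounded DERIV_imp_differentiable_on_UNIV[OF du] DERIV_imp_differentiable_on_UNIV[OF du1] by simp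
  next
    case (Suc m)
    have "smooth_bounded_upto (\<lambda>x. w x * 1) m (\<lambda>x. u x * W x)"
      using Suc.IH W w by (intro smooth_bounded_upto_mult) (auto simp: smooth_bounded_def)
    then have "smooth_bounded_upto w m (\<lambda>x. u x * W x + (- 1) * h x)"
      using h w by (intro smooth_bounded_upto_add smooth_bounded_upto_cmult) (auto simp: smooth_bounded_def)
    then show ?case
      using Suc.IH bounded DERIV_imp_differentiable_on_UNIV[OF du] DERIV_imp_differentiable_on_UNIV[OF du1]
      by (simp add: D D1)
  qed
  then show ?thesis unfolding smooth_bounded_def by blast
qed

lemma weighted_poly_bounded_mult_exp:
  assumes "weighted_poly_bounded (\<lambda>x. exp (a * \<bar>x\<bar>)) f" "weighted_poly_bounded (\<lambda>x. exp (b * \<bar>x\<bar>)) g"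
  shows "weighted_poly_bounded (\<lambda>x. exp ((a + b) * \<bar>x\<bar>)) (\<lambda>x. f x * g x)"
  using weighted_poly_bounded_mult[OF assms] by (simp add: mult_exp_exp distrib_right)

lemma decaying_tendsto_zero:
  assumes "decaying f"
  shows "(f \<longlongrightarrow> 0) at_top" "(f \<longlongrightarrow> 0) at_bot"
  using weighted_poly_bounded_exp_tendsto_zero[OF smooth_bounded_weighted_poly_bounded[OF assms]] by auto

lemma decaying_weight_exp: "decaying f \<Longrightarrow> weighted_poly_bounded (\<lambda>x. exp (- 1 * \<bar>x\<bar>)) f"
  using smooth_bounded_weighted_poly_bounded[of _ f] by simp

section \<open>Polynomial antiderivative and the inverse of \<open>1 - D\<^sup>2\<close> on polynomials\<close>

lemma pderiv_sum: "pderiv (sum f A) = (\<Sum>x\<in>A. pderiv (f x))"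
  using higher_pderiv_sum[of 1 f A] by simp

definition pint :: "real poly \<Rightarrow> real poly" where
  "pint R = (\<Sum>i\<le>degree R. monom (coeff R i / real (Suc i)) (Suc i))"

lemma pderiv_pint: "pderiv (pint R) = R"
proof -
  have "pderiv (pint R) = (\<Sum>i\<le>degree R. monom (coeff R i) i)"
    unfolding pint_def pderiv_sum pderiv_monom by (intro sum.cong) (auto simp del: of_nat_Suc)
  then show ?thesis by (simp add: poly_as_sum_of_monoms)
qed

lemma poly_pint_0: "poly (pint R) 0 = 0"
  unfolding pint_def by (simp add: poly_sum poly_monom)

lemma degree_pint: "degree (pint R) \<le> degree R + 1"
  unfolding pint_def by (intro degree_sum_le) (auto intro: order.trans[OF degree_monom_le])

lemma pint_0 [simp]: "pint 0 = 0"
  unfolding pint_def by simp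

lemma DERIV_poly_pint: "(poly (pint R) has_real_derivative poly R x) (at x)"
  using poly_DERIV[of "pint R" x] by (simp add: pderiv_pint)

lemma even_fun_poly_pint: "odd_fun (poly R) \<Longrightarrow> even_fun (poly (pint R))"
  by (rule even_fun_antiderivative[OF DERIV_poly_pint])

lemma odd_fun_poly_pint: "even_fun (poly R) \<Longrightarrow> odd_fun (poly (pint R))"
  by (rule odd_fun_antiderivative[OF DERIV_poly_pint _ poly_pint_0])

lemma odd_fun_poly_pderiv: "even_fun (poly P) \<Longrightarrow> odd_fun (poly (pderiv P))"
  using odd_fun_deriv[of "poly P"] tempered_poly[of P]
  by (simp add: smooth_bounded_differentiable deriv_fun_eqI[OF poly_DERIV])

lemma even_fun_poly_pderiv: "odd_fun (poly P) \<Longrightarrow> even_fun (poly (pderiv P))"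
  using even_fun_deriv[of "poly P"] tempered_poly[of P]
  by (simp add: smooth_bounded_differentiable deriv_fun_eqI[OF poly_DERIV])

lemma higher_pderiv_eq_0: "degree (P :: real poly) < m \<Longrightarrow> (pderiv ^^ m) P = 0"
proof -
  assume "degree P < m"
  then obtain j where j: "m = Suc j" "degree P \<le> j" by (cases m) auto
  have "degree ((pderiv ^^ j) P) = 0" using j(2) by (simp add: degree_higher_pderiv)
  then have "pderiv ((pderiv ^^ j) P) = 0" using pderiv_eq_0_iff by blast
  then show ?thesis using j(1) by simp
qed

text \<open>On polynomials \<open>1 - D\<^sup>2\<close> is inverted by the terminating Neumann series \<open>\<Sum>\<^sub>i D\<^sup>2\<^sup>i\<close>.\<close>

definition poly_resolvent :: "real poly \<Rightarrow> real poly" where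
  "poly_resolvent R = (\<Sum>i\<le>degree R. (pderiv ^^ (2 * i)) R)"

lemma poly_resolvent_eq: "poly_resolvent R - pderiv (pderiv (poly_resolvent R)) = R"
proof -
  define f where "f i = (pderiv ^^ (2 * i)) R" for i
  have f_Suc: "pderiv (pderiv (f i)) = f (Suc i)" for i
    unfolding f_def by (simp add: funpow_Suc_right[symmetric] del: funpow.simps)
      (simp only: funpow.simps o_apply)
  have "poly_resolvent R - pderiv (pderiv (poly_resolvent R)) = (\<Sum>i<Suc (degree R). f i - f (Suc i))"
    unfolding poly_resolvent_def f_def[symmetric] pderiv_sum f_Suc
    by (simp add: sum_subtractf lessThan_Suc_atMost)
  also have "\<dots> = f 0 - f (Suc (degree R))" by (rule sum_lessThan_telescope')
  also have "f (Suc (degree R)) = 0" unfolding f_def by (rule higher_pderiv_eq_0) simp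
  finally show ?thesis unfolding f_def by simp
qed

lemma degree_poly_resolvent: "degree (poly_resolvent R) \<le> degree R"
  unfolding poly_resolvent_def by (intro degree_sum_le) (auto simp: degree_higher_pderiv)

lemma poly_resolvent_0 [simp]: "poly_resolvent 0 = 0"
  unfolding poly_resolvent_def by simp

lemma even_fun_poly_resolvent: "even_fun (poly R) \<Longrightarrow> even_fun (poly (poly_resolvent R))"
proof -
  assume R: "even_fun (poly R)"
  have "even_fun (poly ((pderiv ^^ (2 * i)) R))" for i
    by (induction i) (auto simp: R odd_fun_poly_pderiv even_fun_poly_pderiv)
  then show ?thesis unfolding poly_resolvent_def even_fun_def by (simp add: poly_sum)
qed

lemma odd_fun_poly_resolvent: "odd_fun (poly R) \<Longrightarrow> odd_fun (poly (poly_resolvent R))"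
proof -
  assume R: "odd_fun (poly R)"
  have "odd_fun (poly ((pderiv ^^ (2 * i)) R))" for i
    by (induction i) (auto simp: R odd_fun_poly_pderiv even_fun_poly_pderiv)
  then show ?thesis unfolding poly_resolvent_def odd_fun_def by (simp add: poly_sum sum_negf)
qed

lemma degree_poly_resolvent_pint: "degree (poly_resolvent (pint R)) \<le> 1 + degree R"
  using degree_poly_resolvent[of "pint R"] degree_pint[of R] by linarith

lemma degree_poly_resolvent_pint_add_pderiv2:
  fixes X Y Z :: "real poly"
  assumes "degree Y \<le> 1 + degree Z"
  shows "degree (poly_resolvent (pint (X + smult c (pderiv (pderiv Y))))) \<le> max (1 + degree X) (degree Z)"
proof -
  have "degree (pderiv (pderiv Y)) \<le> degree Y - 2" by (simp add: degree_pderiv)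
  moreover have "degree (X + smult c (pderiv (pderiv Y))) \<le> max (degree X) (degree (pderiv (pderiv Y)))"
    using degree_add_le_max[of X "smult c (pderiv (pderiv Y))"] degree_smult_le[of c "pderiv (pderiv Y)"]
    by linarith
  moreover have "degree (pderiv (pderiv Y)) = 0 \<or> degree Y \<ge> 2"
    by (cases "degree Y \<ge> 2") (auto simp: degree_pderiv)
  ultimately show ?thesis
    using degree_poly_resolvent_pint[of "X + smult c (pderiv (pderiv Y))"] assms by linarith
qed

lemma odd_fun_poly_resolvent_pint_add_pderiv2:
  "even_fun (poly X) \<Longrightarrow> even_fun (poly Y) \<Longrightarrow>
    odd_fun (poly (poly_resolvent (pint (X + smult c (pderiv (pderiv Y))))))"
  using even_fun_poly_pderiv[OF odd_fun_poly_pderiv[of Y]]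
  by (intro odd_fun_poly_resolvent odd_fun_poly_pint) (simp add: even_fun_def)

lemma even_fun_poly_resolvent_pint_add_pderiv2:
  "odd_fun (poly X) \<Longrightarrow> odd_fun (poly Y) \<Longrightarrow>
    even_fun (poly (poly_resolvent (pint (X + smult c (pderiv (pderiv Y))))))"
  using odd_fun_poly_pderiv[OF even_fun_poly_pderiv[of Y]]
  by (intro even_fun_poly_resolvent even_fun_poly_pint) (simp add: odd_fun_def)

lemma ansatz_polynomials:
  fixes Ft Fh Gt Gh :: "real poly"
  assumes Ft: "odd_fun (poly Ft)" and Fh: "even_fun (poly Fh)"
    and Gt: "even_fun (poly Gt)" and Gh: "odd_fun (poly Gh)"
    and At_def: "At = poly_resolvent (pint Ft)" and Ah_def: "Ah = poly_resolvent (pint Fh)"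
    and Bt_def: "Bt = poly_resolvent (pint (Gt + smult 3 (pderiv (pderiv At))))"
    and Bh_def: "Bh = poly_resolvent (pint (Gh + smult 3 (pderiv (pderiv Ah)))) + [:c:]"
  shows "even_fun (poly At)" "odd_fun (poly Ah)" "odd_fun (poly Bt)" "even_fun (poly Bh)"
    "degree At \<le> 1 + degree Ft" "degree Ah \<le> 1 + degree Fh"
    "degree Bt \<le> max (1 + degree Gt) (degree Ft)" "degree Bh \<le> max (1 + degree Gh) (degree Fh)"
    "Ft = 0 \<Longrightarrow> At = 0" "Fh = 0 \<Longrightarrow> Ah = 0"
    "pderiv (pderiv At) = 0 \<Longrightarrow> Gt = 0 \<Longrightarrow> Bt = 0"
    "pderiv (pderiv Ah) = 0 \<Longrightarrow> Gh = 0 \<Longrightarrow> degree Bh = 0"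
proof -
  show At: "even_fun (poly At)" and Ah: "odd_fun (poly Ah)"
    unfolding At_def Ah_def
    by (rule even_fun_poly_resolvent[OF even_fun_poly_pint[OF Ft]],
        rule odd_fun_poly_resolvent[OF odd_fun_poly_pint[OF Fh]])
  show "odd_fun (poly Bt)" "even_fun (poly Bh)"
    unfolding Bt_def Bh_def using odd_fun_poly_resolvent_pint_add_pderiv2[OF Gt At]
      even_fun_poly_resolvent_pint_add_pderiv2[OF Gh Ah] by (auto simp: even_fun_def)
  show degree_At: "degree At \<le> 1 + degree Ft" and degree_Ah: "degree Ah \<le> 1 + degree Fh"
    unfolding At_def Ah_def by (rule degree_poly_resolvent_pint)+
  show "degree Bt \<le> max (1 + degree Gt) (degree Ft)"
    unfolding Bt_def by (rule degree_poly_resolvent_pint_add_pderiv2[OF degree_At])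
  show "degree Bh \<le> max (1 + degree Gh) (degree Fh)"
    using degree_add_le_max[of _ "[:c:]"] degree_poly_resolvent_pint_add_pderiv2[OF degree_Ah, of Gh 3]
    unfolding Bh_def by (metis degree_pCons_0 max.absorb1 zero_le order.trans)
  show "Ft = 0 \<Longrightarrow> At = 0" "Fh = 0 \<Longrightarrow> Ah = 0" unfolding At_def Ah_def by simp_all
  show "pderiv (pderiv At) = 0 \<Longrightarrow> Gt = 0 \<Longrightarrow> Bt = 0"
    "pderiv (pderiv Ah) = 0 \<Longrightarrow> Gh = 0 \<Longrightarrow> degree Bh = 0"
    unfolding Bt_def Bh_def by simp_all
qed

section \<open>The soliton \<open>Q\<close> and the function \<open>\<phi>\<close>\<close>

lemma cosh_ge_half_exp_abs: "exp \<bar>y\<bar> / 2 \<le> cosh (y::real)"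
proof -
  have "cosh y = (exp \<bar>y\<bar> + exp (- \<bar>y\<bar>)) / 2" by (metis cosh_real_abs cosh_field_def)
  then show ?thesis by (smt (verit) exp_gt_zero divide_right_mono)
qed

lemma cosh_le_exp_abs: "cosh (y::real) \<le> exp \<bar>y\<bar>"
proof -
  have "2 * cosh y = exp \<bar>y\<bar> + exp (- \<bar>y\<bar>)" by (metis cosh_real_abs cosh_field_def times_divide_eq_right
      nonzero_mult_div_cancel_left zero_neq_numeral)
  moreover have "exp (- \<bar>y\<bar>) \<le> exp \<bar>y\<bar>" by simp
  ultimately show ?thesis by linarith
qed

lemma one_minus_tanh_square: "1 - tanh (y::real) ^ 2 = 1 / cosh y ^ 2"
  unfolding tanh_def using cosh_real_pos[of y] by (simp add: power_divide field_simps sinh_square_eq)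

locale soliton =
  fixes p :: nat
  assumes p: "p \<in> {2, 3, 4}"
begin

definition k :: real where "k = (real p - 1) / 2"

abbreviation Q :: "real \<Rightarrow> real" where "Q \<equiv> Qp p"
abbreviation \<phi> :: "real \<Rightarrow> real" where "\<phi> \<equiv> phi p"

lemma k_ge: "k \<ge> 1 / 2" and k_le: "k \<le> 3 / 2"
  using p unfolding k_def by auto

lemma k_pos: "k > 0"
  using k_ge by simp

lemma real_p: "real p = 2 * k + 1"
  by (simp add: k_def field_simps)

lemma real_p_minus_1: "real (p - 1) = 2 * k"
  using p unfolding k_def by auto

lemma phi_tanh: "\<phi> x = tanh (k * x)"
  unfolding phi_def k_def by simp

lemma phi_minus: "\<phi> (- x) = - \<phi> x"
  unfolding phi_tanh by simp

lemma phi_0: "\<phi> 0 = 0"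
  unfolding phi_tanh by simp

lemma abs_phi_less_1: "\<bar>\<phi> x\<bar> < 1"
  unfolding phi_tanh using tanh_real_lt_1 tanh_real_gt_neg1 by (simp add: abs_less_iff)

lemma abs_phi_le_1: "\<bar>\<phi> x\<bar> \<le> 1"
  using abs_phi_less_1 less_imp_le by blast

lemma phi_nonneg: "x \<ge> 0 \<Longrightarrow> \<phi> x \<ge> 0"
  unfolding phi_tanh using k_pos by (simp add: tanh_real_nonneg_iff)

lemma phi_DERIV: "(\<phi> has_real_derivative k * (1 - \<phi> x ^ 2)) (at x)"
proof -
  have "((\<lambda>x. tanh (k * x)) has_real_derivative (1 - tanh (k * x) ^ 2) * k) (at x)"
    by (rule DERIV_chain2[where f = tanh])
       (auto intro!: derivative_eq_intros simp: cosh_real_pos[THEN less_imp_neq, symmetric])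
  then show ?thesis unfolding phi_tanh[abs_def] by (simp add: mult.commute)
qed

lemma sech2_pos: "0 < 1 - \<phi> x ^ 2"
  using abs_phi_less_1[of x] by (simp add: abs_square_less_1)

lemma sech2_cosh: "1 - \<phi> x ^ 2 = 1 / cosh (k * x) ^ 2"
  unfolding phi_tanh by (rule one_minus_tanh_square)

lemma sech2_le_exp: "1 - \<phi> x ^ 2 \<le> 4 * exp (- (2 * k) * \<bar>x\<bar>)"
proof -
  have "exp (k * \<bar>x\<bar>) / 2 \<le> cosh (k * x)"
    using cosh_ge_half_exp_abs[of "k * x"] k_pos by (simp add: abs_mult)
  then have "(exp (k * \<bar>x\<bar>) / 2) ^ 2 \<le> cosh (k * x) ^ 2" by (rule power_mono) auto
  then have "exp (2 * k * \<bar>x\<bar>) / 4 \<le> cosh (k * x) ^ 2"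
    by (simp add: power2_eq_square exp_add[symmetric] algebra_simps)
  then have "1 / cosh (k * x) ^ 2 \<le> 1 / (exp (2 * k * \<bar>x\<bar>) / 4)"
    by (intro divide_left_mono) auto
  also have "\<dots> = 4 * exp (- (2 * k) * \<bar>x\<bar>)" by (simp add: exp_minus field_simps)
  finally show ?thesis using sech2_cosh by simp
qed

lemma exp_le_sech2: "exp (- (2 * k) * \<bar>x\<bar>) \<le> 1 - \<phi> x ^ 2"
proof -
  have "cosh (k * x) \<le> exp (k * \<bar>x\<bar>)"
    using cosh_le_exp_abs[of "k * x"] k_pos by (simp add: abs_mult)
  then have "cosh (k * x) ^ 2 \<le> exp (k * \<bar>x\<bar>) ^ 2" by (rule power_mono) (simp add: less_imp_le)
  then have "cosh (k * x) ^ 2 \<le> exp (2 * k * \<bar>x\<bar>)"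
    by (simp add: power2_eq_square exp_add[symmetric] algebra_simps)
  then have "1 / exp (2 * k * \<bar>x\<bar>) \<le> 1 / cosh (k * x) ^ 2"
    by (intro divide_left_mono) auto
  moreover have "exp (- (2 * k) * \<bar>x\<bar>) = 1 / exp (2 * k * \<bar>x\<bar>)" by (simp add: exp_minus field_simps)
  ultimately show ?thesis using sech2_cosh[of x] by simp
qed

lemma sech2_le_exp_abs: "1 - \<phi> x ^ 2 \<le> 4 * exp (- \<bar>x\<bar>)"
proof -
  have "\<bar>x\<bar> \<le> 2 * k * \<bar>x\<bar>" using mult_right_mono[of 1 "2 * k" "\<bar>x\<bar>"] k_ge by simp
  then have "exp (- (2 * k) * \<bar>x\<bar>) \<le> exp (- \<bar>x\<bar>)" by simp
  then show ?thesis using sech2_le_exp[of x] by linarith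
qed

lemma Q_eq: "Q x = ((k + 1) * (1 - \<phi> x ^ 2)) powr (1 / (2 * k))"
proof -
  have "(real p + 1) / (2 * (cosh ((real p - 1) / 2 * x))\<^sup>2) = (k + 1) * (1 - \<phi> x ^ 2)"
    unfolding sech2_cosh by (simp add: k_def field_simps)
  moreover have "real p - 1 = 2 * k" by (simp add: k_def)
  ultimately show ?thesis unfolding Qp_def by simp
qed

lemma Q_pos: "Q x > 0"
  using k_pos sech2_pos[of x] unfolding Q_eq by simp

lemma Q_pow_p_minus_1: "Q x ^ (p - 1) = (k + 1) * (1 - \<phi> x ^ 2)"
proof -
  have "Q x ^ (p - 1) = ((k + 1) * (1 - \<phi> x ^ 2)) powr ((1 / (2 * k)) * real (p - 1))"
    using Q_pos[of x] unfolding Q_eq by (simp add: powr_realpow[symmetric] powr_powr)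
  also have "(1 / (2 * k)) * real (p - 1) = 1" using real_p_minus_1 k_pos by simp
  finally show ?thesis using sech2_pos[of x] k_pos by simp
qed

lemma Q_pow_p: "Q x ^ p = Q x * ((k + 1) * (1 - \<phi> x ^ 2))"
  using p Q_pow_p_minus_1[of x] by (auto simp: numeral_eq_Suc)

lemma Q_minus: "Q (- x) = Q x"
  unfolding Q_eq phi_minus by simp

lemma Q_DERIV: "(Q has_real_derivative - (Q x * \<phi> x)) (at x)"
proof -
  define b where "b x = (k + 1) * (1 - \<phi> x ^ 2)" for x
  have b: "b x > 0" unfolding b_def using sech2_pos k_pos by simp
  have db: "(b has_real_derivative b x * (- 2 * k * \<phi> x)) (at x)"
    unfolding b_def by (auto intro!: derivative_eq_intros phi_DERIV simp: algebra_simps power2_eq_square)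
  have "((\<lambda>x. b x powr (1 / (2 * k))) has_real_derivative
      (1 / (2 * k)) * b x powr (1 / (2 * k) - 1) * (b x * (- 2 * k * \<phi> x))) (at x)"
    using DERIV_fun_powr[OF db b, of "1 / (2 * k)"] by simp
  moreover have "(1 / (2 * k)) * b x powr (1 / (2 * k) - 1) * (b x * (- 2 * k * \<phi> x))
      = - (b x powr (1 / (2 * k)) * \<phi> x)"
  proof -
    have "b x powr (1 / (2 * k) - 1) = b x powr (1 / (2 * k)) / b x" using b by (simp add: powr_diff)
    then show ?thesis using b k_pos by (simp add: field_simps)
  qed
  moreover have "Q = (\<lambda>x. b x powr (1 / (2 * k)))" unfolding b_def Q_eq[abs_def] by simp
  ultimately show ?thesis unfolding b_def by simp
qed

definition CQ :: real where "CQ = (4 * (k + 1)) powr (1 / (2 * k))"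
definition cq :: real where "cq = (k + 1) powr (1 / (2 * k))"

lemma cq_pos: "cq > 0"
  unfolding cq_def using k_pos by simp

lemma Q_le_exp: "Q x \<le> CQ * exp (- \<bar>x\<bar>)"
proof -
  have "Q x \<le> ((k + 1) * (4 * exp (- (2 * k) * \<bar>x\<bar>))) powr (1 / (2 * k))"
    unfolding Q_eq using sech2_pos[of x, THEN less_imp_le] k_pos sech2_le_exp[of x]
    by (intro powr_mono2) auto
  also have "\<dots> = (4 * (k + 1)) powr (1 / (2 * k)) * exp (- (2 * k) * \<bar>x\<bar>) powr (1 / (2 * k))"
    using k_pos by (subst powr_mult[symmetric]) (auto simp: algebra_simps)
  also have "exp (- (2 * k) * \<bar>x\<bar>) powr (1 / (2 * k)) = exp (- \<bar>x\<bar>)"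
    using k_pos by (simp add: exp_powr_real)
  finally show ?thesis unfolding CQ_def .
qed

lemma exp_le_Q: "cq * exp (- \<bar>x\<bar>) \<le> Q x"
proof -
  have "((k + 1) * exp (- (2 * k) * \<bar>x\<bar>)) powr (1 / (2 * k)) \<le> Q x"
    unfolding Q_eq using sech2_pos[of x] k_pos exp_le_sech2[of x] by (intro powr_mono2) auto
  then show ?thesis unfolding cq_def using k_pos by (simp add: powr_mult exp_powr_real)
qed

lemma inverse_Q_le_exp: "1 / Q x \<le> exp \<bar>x\<bar> / cq"
  using exp_le_Q[of x] cq_pos Q_pos[of x] by (simp add: field_simps exp_minus)

lemma decaying_Q_mult_poly_phi: "decaying (\<lambda>x. Q x * poly R (\<phi> x))"
proof (rule riccati_family_smooth_bounded[OF phi_DERIV abs_phi_le_1])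
  show "(Q has_real_derivative Q x * poly [:0, -1:] (\<phi> x)) (at x)" for x
    using Q_DERIV[of x] by simp
  show "weighted_poly_bounded (\<lambda>x. exp (- \<bar>x\<bar>)) Q"
    using Q_le_exp Q_pos by (intro weighted_poly_boundedI[of _ CQ 0]) (simp add: less_imp_le)
qed

lemma decaying_sech2_mult_poly_phi: "decaying (\<lambda>x. (1 - \<phi> x ^ 2) * poly R (\<phi> x))"
proof (rule riccati_family_smooth_bounded[OF phi_DERIV abs_phi_le_1])
  show "((\<lambda>x. 1 - \<phi> x ^ 2) has_real_derivative (1 - \<phi> x ^ 2) * poly [:0, - 2 * k:] (\<phi> x)) (at x)" for x
    by (auto intro!: derivative_eq_intros phi_DERIV simp: algebra_simps power2_eq_square)
  show "weighted_poly_bounded (\<lambda>x. exp (- \<bar>x\<bar>)) (\<lambda>x. 1 - \<phi> x ^ 2)"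
    using sech2_le_exp_abs sech2_pos by (intro weighted_poly_boundedI[of _ 4 0]) (simp add: less_imp_le)
qed

lemma tempered_poly_phi: "tempered (\<lambda>x. poly R (\<phi> x))"
  using riccati_family_smooth_bounded[OF phi_DERIV abs_phi_le_1, of "\<lambda>x. 1" 0 "\<lambda>x. 1" R]
    weighted_poly_bounded_const_bound[of "\<lambda>x. 1" 1] by simp

lemma decaying_Q: "decaying Q"
  using decaying_Q_mult_poly_phi[of 1] by simp

lemma decaying_sech2: "decaying (\<lambda>x. 1 - \<phi> x ^ 2)"
  using decaying_sech2_mult_poly_phi[of 1] by simp

lemma tempered_phi: "tempered \<phi>"
  using tempered_poly_phi[of "[:0, 1:]"] by simp

definition V :: "real \<Rightarrow> real" where "V x = real p * Q x ^ (p - 1)"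

lemma V_eq: "V x = (2 * k + 1) * (k + 1) * (1 - \<phi> x ^ 2)"
  unfolding V_def Q_pow_p_minus_1 real_p by simp

lemma decaying_V: "decaying V"
  using smooth_bounded_cmult[OF decaying_sech2, of "(2 * k + 1) * (k + 1)"]
  by (simp add: V_eq[abs_def] mult.assoc)

lemma V_minus: "V (- x) = V x"
  unfolding V_eq phi_minus by simp

section \<open>The kernel of the linearized operator and its inversion\<close>


lemma continuous_on_Q: "continuous_on UNIV Q"
  by (rule smooth_bounded_continuous_on[OF decaying_Q])

definition S :: "real \<Rightarrow> real" where
  "S = (SOME G. (\<forall>x. (G has_real_derivative 1 / Q x ^ 2) (at x)) \<and> G 0 = 0)"

lemma S_DERIV: "(S has_real_derivative 1 / Q x ^ 2) (at x)" and S_0: "S 0 = 0"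
proof -
  have "continuous_on UNIV (\<lambda>x. 1 / Q x ^ 2)"
    using continuous_on_Q Q_pos by (intro continuous_intros) (auto simp: less_imp_neq[symmetric])
  then obtain G where "\<And>x. (G has_real_derivative 1 / Q x ^ 2) (at x)" "G 0 = 0"
    by (rule exists_antiderivative) blast
  then have "(\<forall>x. (S has_real_derivative 1 / Q x ^ 2) (at x)) \<and> S 0 = 0"
    unfolding S_def by (intro someI[of "\<lambda>G. (\<forall>x. (G has_real_derivative 1 / Q x ^ 2) (at x)) \<and> G 0 = 0" G])
      blast
  then show "(S has_real_derivative 1 / Q x ^ 2) (at x)" "S 0 = 0" by blast+
qed

lemma S_minus: "S (- x) = - S x"
  using odd_fun_antiderivative[OF S_DERIV _ S_0] by (simp add: even_fun_def odd_fun_def Q_minus)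

definition y1 :: "real \<Rightarrow> real" where "y1 x = Q x * \<phi> x"
definition y1' :: "real \<Rightarrow> real" where "y1' x = Q x * (k - (k + 1) * \<phi> x ^ 2)"

text \<open>\<open>y1 = - Q'\<close> spans the kernel of \<open>- D\<^sup>2 + 1 - V\<close> among bounded functions; the second
  solution \<open>y2\<close> comes from reduction of order, with \<open>c0\<close> normalizing the Wronskian to \<open>-1\<close>.\<close>

definition c0 :: real where "c0 = 1 + 2 / k"
definition y2 :: "real \<Rightarrow> real" where "y2 x = 1 / (k * Q x) - c0 * y1 x * S x"
definition y2' :: "real \<Rightarrow> real" where "y2' x = \<phi> x / (k * Q x) - c0 * (y1' x * S x + \<phi> x / Q x)"

lemma y1_DERIV: "(y1 has_real_derivative y1' x) (at x)"
  unfolding y1_def[abs_def] y1'_def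
  by (auto intro!: derivative_eq_intros Q_DERIV phi_DERIV simp: algebra_simps power2_eq_square)

lemma y1'_DERIV: "(y1' has_real_derivative (1 - V x) * y1 x) (at x)"
  unfolding y1'_def[abs_def] y1_def V_eq
  by (auto intro!: derivative_eq_intros Q_DERIV phi_DERIV simp: algebra_simps power2_eq_square)

lemma y2_DERIV: "(y2 has_real_derivative y2' x) (at x)"
proof -
  have "(y2 has_real_derivative \<phi> x / (k * Q x) - c0 * (y1' x * S x + 1 / Q x ^ 2 * y1 x)) (at x)"
    unfolding y2_def[abs_def] using Q_pos[of x] k_pos
    by (auto intro!: derivative_eq_intros Q_DERIV y1_DERIV S_DERIV simp: field_simps power2_eq_square)
  moreover have "1 / Q x ^ 2 * y1 x = \<phi> x / Q x"
    unfolding y1_def using Q_pos[of x] by (simp add: field_simps power2_eq_square)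
  ultimately show ?thesis unfolding y2'_def by simp
qed

lemma y2'_DERIV: "(y2' has_real_derivative (1 - V x) * y2 x) (at x)"
proof -
  define r where "r x = k * (1 - \<phi> x ^ 2) + \<phi> x ^ 2" for x
  have phi_Q: "((\<lambda>x. \<phi> x / Q x) has_real_derivative r x / Q x) (at x)" for x
    unfolding r_def using Q_pos[of x]
    by (auto intro!: derivative_eq_intros Q_DERIV phi_DERIV simp: field_simps power2_eq_square)
  have "y2' = (\<lambda>x. 1 / k * (\<phi> x / Q x) - c0 * (y1' x * S x + \<phi> x / Q x))"
    unfolding y2'_def[abs_def] by simp
  moreover have "((\<lambda>x. 1 / k * (\<phi> x / Q x) - c0 * (y1' x * S x + \<phi> x / Q x)) has_real_derivative
      1 / k * (r x / Q x) - c0 * ((1 - V x) * y1 x * S x + 1 / Q x ^ 2 * y1' x + r x / Q x)) (at x)"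
    by (intro DERIV_diff DERIV_cmult DERIV_add DERIV_mult y1'_DERIV S_DERIV phi_Q)
  moreover have "1 / k * (r x / Q x) - c0 * ((1 - V x) * y1 x * S x + 1 / Q x ^ 2 * y1' x + r x / Q x)
      = (1 - V x) * y2 x"
    unfolding r_def y2_def y1'_def y1_def V_eq c0_def using Q_pos[of x] k_pos
    by (simp add: field_simps power2_eq_square)
  ultimately show ?thesis by simp
qed

lemma wronskian: "y1 x * y2' x - y1' x * y2 x = - 1"
  unfolding y1_def y2'_def y1'_def y2_def c0_def using Q_pos[of x] k_pos
  by (simp add: field_simps power2_eq_square)

lemma y1_minus: "y1 (- x) = - y1 x"
  unfolding y1_def Q_minus phi_minus by simp

lemma y2_minus: "y2 (- x) = y2 x"
  unfolding y2_def y1_def Q_minus phi_minus S_minus by simp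

lemma decaying_y1: "decaying y1"
  using decaying_Q_mult_poly_phi[of "[:0, 1:]"] unfolding y1_def[abs_def] by simp

lemma weighted_poly_bounded_y1': "weighted_poly_bounded (\<lambda>x. exp (- 1 * \<bar>x\<bar>)) y1'"
  using smooth_bounded_weighted_poly_bounded[OF smooth_bounded_deriv[OF decaying_y1]]
  by (simp add: deriv_fun_eqI[OF y1_DERIV])

lemma weighted_poly_bounded_inverse_Q: "weighted_poly_bounded (\<lambda>x. exp (1 * \<bar>x\<bar>)) (\<lambda>x. 1 / Q x)"
proof (rule weighted_poly_boundedI[of _ "1 / cq" 0])
  show "\<bar>1 / Q x\<bar> \<le> 1 / cq * (1 + \<bar>x\<bar>) ^ 0 * exp (1 * \<bar>x\<bar>)" for x
    using inverse_Q_le_exp[of x] Q_pos[of x] by simp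
qed

lemma weighted_poly_bounded_S: "weighted_poly_bounded (\<lambda>x. exp (2 * \<bar>x\<bar>)) S"
proof (rule weighted_poly_boundedI[of _ "1 / cq ^ 2" 1])
  fix x
  have "\<bar>S x - S 0\<bar> \<le> exp (2 * \<bar>x\<bar>) / cq ^ 2 * \<bar>x\<bar>"
  proof (rule DERIV_abs_diff_le[OF S_DERIV])
    fix t :: real assume "\<bar>t\<bar> \<le> \<bar>x\<bar>"
    then have "1 / Q t \<le> exp \<bar>x\<bar> / cq"
      using inverse_Q_le_exp[of t] cq_pos by (smt (verit) divide_right_mono exp_le_cancel_iff)
    then have "(1 / Q t) ^ 2 \<le> (exp \<bar>x\<bar> / cq) ^ 2" using Q_pos[of t] by (intro power_mono) auto
    then show "\<bar>1 / Q t ^ 2\<bar> \<le> exp (2 * \<bar>x\<bar>) / cq ^ 2"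
      by (simp add: power_divide power2_eq_square mult_exp_exp)
  qed
  then have "\<bar>S x\<bar> \<le> exp (2 * \<bar>x\<bar>) / cq ^ 2 * \<bar>x\<bar>" using S_0 by simp
  also have "\<dots> \<le> exp (2 * \<bar>x\<bar>) / cq ^ 2 * (1 + \<bar>x\<bar>)" by (intro mult_left_mono) auto
  finally show "\<bar>S x\<bar> \<le> 1 / cq ^ 2 * (1 + \<bar>x\<bar>) ^ 1 * exp (2 * \<bar>x\<bar>)" by (simp add: field_simps)
qed

lemma weighted_poly_bounded_y2: "weighted_poly_bounded (\<lambda>x. exp (1 * \<bar>x\<bar>)) y2"
  and weighted_poly_bounded_y2': "weighted_poly_bounded (\<lambda>x. exp (1 * \<bar>x\<bar>)) y2'"
proof -
  have y1: "weighted_poly_bounded (\<lambda>x. exp (- 1 * \<bar>x\<bar>)) y1"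
    using smooth_bounded_weighted_poly_bounded[OF decaying_y1] by simp
  have phi: "weighted_poly_bounded (\<lambda>x. exp (0 * \<bar>x\<bar>)) \<phi>"
    using smooth_bounded_weighted_poly_bounded[OF tempered_phi] by simp
  have "weighted_poly_bounded (\<lambda>x. exp ((- 1 + 2) * \<bar>x\<bar>)) (\<lambda>x. y1 x * S x)"
    "weighted_poly_bounded (\<lambda>x. exp ((- 1 + 2) * \<bar>x\<bar>)) (\<lambda>x. y1' x * S x)"
    "weighted_poly_bounded (\<lambda>x. exp ((0 + 1) * \<bar>x\<bar>)) (\<lambda>x. \<phi> x * (1 / Q x))"
    by (intro weighted_poly_bounded_mult_exp y1 weighted_poly_bounded_y1' weighted_poly_bounded_S phi
        weighted_poly_bounded_inverse_Q)+
  then have products: "weighted_poly_bounded (\<lambda>x. exp (1 * \<bar>x\<bar>)) (\<lambda>x. y1 x * S x)"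
    "weighted_poly_bounded (\<lambda>x. exp (1 * \<bar>x\<bar>)) (\<lambda>x. y1' x * S x)"
    "weighted_poly_bounded (\<lambda>x. exp (1 * \<bar>x\<bar>)) (\<lambda>x. \<phi> x / Q x)"
    by simp_all
  have "weighted_poly_bounded (\<lambda>x. exp (1 * \<bar>x\<bar>)) (\<lambda>x. 1 / k * (1 / Q x) + (- c0) * (y1 x * S x))"
    by (intro weighted_poly_bounded_add weighted_poly_bounded_cmult weighted_poly_bounded_inverse_Q products) simp
  then show "weighted_poly_bounded (\<lambda>x. exp (1 * \<bar>x\<bar>)) y2"
    unfolding y2_def[abs_def] by (simp add: algebra_simps)
  have "weighted_poly_bounded (\<lambda>x. exp (1 * \<bar>x\<bar>))
      (\<lambda>x. 1 / k * (\<phi> x / Q x) + (- c0) * (y1' x * S x + \<phi> x / Q x))"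
    by (intro weighted_poly_bounded_add weighted_poly_bounded_cmult products) simp_all
  then show "weighted_poly_bounded (\<lambda>x. exp (1 * \<bar>x\<bar>)) y2'"
    unfolding y2'_def[abs_def] by (simp add: algebra_simps)
qed


lemma tail_integral_y1:
  assumes h: "decaying h" and orth: "has_improper_integral (\<lambda>x. y1 x * h x) 0"
  obtains J where "\<And>x. (J has_real_derivative - (y1 x * h x)) (at x)"
    "weighted_poly_bounded (\<lambda>x. exp (- 2 * \<bar>x\<bar>)) J"
    "even_fun h \<Longrightarrow> even_fun J" "odd_fun h \<Longrightarrow> odd_fun J"
proof -
  have "weighted_poly_bounded (\<lambda>x. exp ((- 1 + - 1) * \<bar>x\<bar>)) (\<lambda>x. y1 x * h x)"
    by (intro weighted_poly_bounded_mult_exp decaying_weight_exp decaying_y1 h)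
  then have bounded: "weighted_poly_bounded (\<lambda>x. exp (- 2 * \<bar>x\<bar>)) (\<lambda>x. y1 x * h x)" by simp
  have "continuous_on UNIV (\<lambda>x. y1 x * h x)"
    by (intro continuous_on_mult smooth_bounded_continuous_on[OF decaying_y1] smooth_bounded_continuous_on[OF h])
  then obtain G where G: "\<And>x. (G has_real_derivative y1 x * h x) (at x)" "G 0 = 0"
    by (rule exists_antiderivative) blast
  obtain Lp Lm where lim: "(G \<longlongrightarrow> Lp) at_top" "(G \<longlongrightarrow> Lm) at_bot"
    and near: "weighted_poly_bounded (\<lambda>x. exp (- 2 * \<bar>x\<bar>)) (\<lambda>x. G x - (if x \<ge> 0 then Lp else Lm))"
    by (rule DERIV_limits_weighted_poly_bounded[OF G(1) bounded]) auto
  have L: "Lm = Lp" using has_improper_integral_limits[OF orth G(1) lim] by simp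
  have J: "((\<lambda>x. Lp - G x) has_real_derivative - (y1 x * h x)) (at x)" for x
    using DERIV_diff[OF DERIV_const G(1)] by simp
  show thesis
  proof (rule that[OF J])
    show "weighted_poly_bounded (\<lambda>x. exp (- 2 * \<bar>x\<bar>)) (\<lambda>x. Lp - G x)"
      using weighted_poly_bounded_cmult[OF near, of "- 1"] L by (simp add: if_distrib cong: if_cong)
    show "even_fun (\<lambda>x. Lp - G x)" if "even_fun h"
      using even_fun_antiderivative[OF G(1)] that y1_minus by (simp add: even_fun_def odd_fun_def)
    show "odd_fun (\<lambda>x. Lp - G x)" if "odd_fun h"
    proof -
      have "odd_fun G"
        using odd_fun_antiderivative[OF G(1) _ G(2)] that y1_minus by (simp add: even_fun_def odd_fun_def)
      then have "((\<lambda>x. - G x) \<longlongrightarrow> Lm) at_top"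
        using lim(2) unfolding filterlim_at_bot_mirror by (simp add: odd_fun_def)
      then have "Lm = - Lp" by (rule tendsto_unique[OF trivial_limit_at_top_linorder _ tendsto_minus[OF lim(1)]])
      then show ?thesis using L \<open>odd_fun G\<close> by (simp add: odd_fun_def)
    qed
  qed
qed

lemma primitive_y2:
  assumes h: "decaying h"
  obtains I where "\<And>x. (I has_real_derivative y2 x * h x) (at x)"
    "weighted_poly_bounded (\<lambda>x. 1) I"
    "even_fun h \<Longrightarrow> odd_fun I" "odd_fun h \<Longrightarrow> even_fun I"
proof -
  have "weighted_poly_bounded (\<lambda>x. exp ((1 + - 1) * \<bar>x\<bar>)) (\<lambda>x. y2 x * h x)"
    by (intro weighted_poly_bounded_mult_exp decaying_weight_exp weighted_poly_bounded_y2 h)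
  then have bounded: "weighted_poly_bounded (\<lambda>x. 1) (\<lambda>x. y2 x * h x)" by simp
  have "continuous_on UNIV y2"
    by (rule differentiable_imp_continuous_on[OF DERIV_imp_differentiable_on_UNIV[OF y2_DERIV]])
  then have "continuous_on UNIV (\<lambda>x. y2 x * h x)"
    by (rule continuous_on_mult[OF _ smooth_bounded_continuous_on[OF h]])
  then obtain I where I: "\<And>x. (I has_real_derivative y2 x * h x) (at x)" "I 0 = 0"
    by (rule exists_antiderivative) blast
  show thesis
  proof (rule that[OF I(1)])
    show "weighted_poly_bounded (\<lambda>x. 1) I"
      using weighted_poly_bounded_antiderivative[OF I(1) bounded] I(2) by simp
    show "odd_fun I" if "even_fun h"
      using odd_fun_antiderivative[OF I(1) _ I(2)] that y2_minus by (simp add: even_fun_def)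
    show "even_fun I" if "odd_fun h"
      using even_fun_antiderivative[OF I(1)] that y2_minus by (simp add: odd_fun_def)
  qed
qed

text \<open>Variation of constants: \<open>u = - y1 I - y2 J\<close> with \<open>I' = y2 h\<close> and \<open>J' = - y1 h\<close> solves
  \<open>- u'' + u - V u = h\<close>. The vanishing of \<open>\<integral> y1 h\<close> is what allows \<open>J\<close> to be chosen decaying like
  \<open>e\<^sup>-\<^sup>2\<^sup>|\<^sup>x\<^sup>|\<close>, which compensates the growth of \<open>y2\<close>.\<close>

lemma variation_of_constants:
  assumes I: "\<And>x. (I has_real_derivative y2 x * h x) (at x)"
    and J: "\<And>x. (J has_real_derivative - (y1 x * h x)) (at x)"
  shows "((\<lambda>x. - (y1 x * I x) - y2 x * J x) has_real_derivative - (y1' x * I x) - y2' x * J x) (at x)"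
    "((\<lambda>x. - (y1' x * I x) - y2' x * J x) has_real_derivative
        (- (y1 x * I x) - y2 x * J x) * (1 - V x) - h x) (at x)"
proof -
  have "((\<lambda>x. - (y1 x * I x) - y2 x * J x) has_real_derivative
      - (y1' x * I x + y2 x * h x * y1 x) - (y2' x * J x + - (y1 x * h x) * y2 x)) (at x)"
    by (intro DERIV_diff DERIV_minus DERIV_mult y1_DERIV y2_DERIV I J)
  then show "((\<lambda>x. - (y1 x * I x) - y2 x * J x) has_real_derivative - (y1' x * I x) - y2' x * J x) (at x)"
    by (simp add: algebra_simps)
  have "((\<lambda>x. - (y1' x * I x) - y2' x * J x) has_real_derivative - ((1 - V x) * y1 x * I x + y2 x * h x * y1' x)
      - ((1 - V x) * y2 x * J x + - (y1 x * h x) * y2' x)) (at x)"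
    by (intro DERIV_diff DERIV_minus DERIV_mult y1'_DERIV y2'_DERIV I J)
  moreover have "- ((1 - V x) * y1 x * I x + y2 x * h x * y1' x) - ((1 - V x) * y2 x * J x + - (y1 x * h x) * y2' x)
      = (- (y1 x * I x) - y2 x * J x) * (1 - V x) + h x * (y1 x * y2' x - y1' x * y2 x)"
    by (simp add: algebra_simps)
  ultimately show "((\<lambda>x. - (y1' x * I x) - y2' x * J x) has_real_derivative
      (- (y1 x * I x) - y2 x * J x) * (1 - V x) - h x) (at x)"
    unfolding wronskian by simp
qed

lemma solve_linearized:
  assumes h: "decaying h" and orth: "has_improper_integral (\<lambda>x. y1 x * h x) 0"
  obtains u where "decaying u" "\<And>x. - deriv (deriv u) x + u x - V x * u x = h x"
    "even_fun h \<Longrightarrow> even_fun u" "odd_fun h \<Longrightarrow> odd_fun u"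
proof -
  obtain J where J: "\<And>x. (J has_real_derivative - (y1 x * h x)) (at x)"
    "weighted_poly_bounded (\<lambda>x. exp (- 2 * \<bar>x\<bar>)) J"
    "even_fun h \<Longrightarrow> even_fun J" "odd_fun h \<Longrightarrow> odd_fun J"
    by (rule tail_integral_y1[OF h orth]) blast
  obtain I where I: "\<And>x. (I has_real_derivative y2 x * h x) (at x)"
    "weighted_poly_bounded (\<lambda>x. 1) I"
    "even_fun h \<Longrightarrow> odd_fun I" "odd_fun h \<Longrightarrow> even_fun I"
    by (rule primitive_y2[OF h]) blast
  define u where "u x = - (y1 x * I x) - y2 x * J x" for x
  define u1 where "u1 x = - (y1' x * I x) - y2' x * J x" for x
  have du: "(u has_real_derivative u1 x) (at x)" and du1: "(u1 has_real_derivative u x * (1 - V x) - h x) (at x)"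
    for x unfolding u_def[abs_def] u1_def[abs_def] by (rule variation_of_constants[OF I(1) J(1)])+
  have bounded: "weighted_poly_bounded (\<lambda>x. exp (- 1 * \<bar>x\<bar>)) u"
    "weighted_poly_bounded (\<lambda>x. exp (- 1 * \<bar>x\<bar>)) u1"
  proof -
    have I': "weighted_poly_bounded (\<lambda>x. exp (0 * \<bar>x\<bar>)) I" using I(2) by simp
    have "weighted_poly_bounded (\<lambda>x. exp ((- 1 + 0) * \<bar>x\<bar>)) (\<lambda>x. y1 x * I x)"
      "weighted_poly_bounded (\<lambda>x. exp ((1 + - 2) * \<bar>x\<bar>)) (\<lambda>x. y2 x * J x)"
      "weighted_poly_bounded (\<lambda>x. exp ((- 1 + 0) * \<bar>x\<bar>)) (\<lambda>x. y1' x * I x)"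
      "weighted_poly_bounded (\<lambda>x. exp ((1 + - 2) * \<bar>x\<bar>)) (\<lambda>x. y2' x * J x)"
      by (intro weighted_poly_bounded_mult_exp decaying_weight_exp decaying_y1 weighted_poly_bounded_y1'
          weighted_poly_bounded_y2 weighted_poly_bounded_y2' I' J(2))+
    then show "weighted_poly_bounded (\<lambda>x. exp (- 1 * \<bar>x\<bar>)) u"
      "weighted_poly_bounded (\<lambda>x. exp (- 1 * \<bar>x\<bar>)) u1"
      unfolding u_def[abs_def] u1_def[abs_def]
      by (simp_all add: weighted_poly_bounded_diff weighted_poly_bounded_minus)
  qed
  show thesis
  proof (rule that)
    have "tempered (\<lambda>x. 1 - V x)"
      using smooth_bounded_diff[OF tempered_const decaying_imp_tempered[OF decaying_V]] by simp
    then show "decaying u"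
      using bounded by (intro smooth_bounded_second_order_ODE[OF du du1 _ _ h]) simp_all
    show "- deriv (deriv u) x + u x - V x * u x = h x" for x
      using deriv_deriv_eqI[OF du du1] by (simp add: algebra_simps)
    show "even_fun u" if "even_fun h"
      using I(3)[OF that] J(3)[OF that] y1_minus y2_minus unfolding u_def even_fun_def odd_fun_def by simp
    show "odd_fun u" if "odd_fun h"
      using I(4)[OF that] J(4)[OF that] y1_minus y2_minus unfolding u_def even_fun_def odd_fun_def by simp
  qed
qed

section \<open>Primitives of even functions and the explicit \<open>a\<close>-dependent terms\<close>


definition \<phi>' :: "real \<Rightarrow> real" where "\<phi>' x = k * (1 - \<phi> x ^ 2)"
definition \<phi>'' :: "real \<Rightarrow> real" where "\<phi>'' x = - 2 * k\<^sup>2 * \<phi> x * (1 - \<phi> x ^ 2)"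

lemma phi_DERIV_phi': "(\<phi> has_real_derivative \<phi>' x) (at x)"
  unfolding \<phi>'_def by (rule phi_DERIV)

lemma phi'_DERIV: "(\<phi>' has_real_derivative \<phi>'' x) (at x)"
  unfolding \<phi>'_def[abs_def] \<phi>''_def
  by (auto intro!: derivative_eq_intros phi_DERIV simp: algebra_simps power2_eq_square)

lemma decaying_phi': "decaying \<phi>'"
  using smooth_bounded_cmult[OF decaying_sech2, of k] unfolding \<phi>'_def[abs_def] .

lemma decaying_phi'': "decaying \<phi>''"
  using decaying_sech2_mult_poly_phi[of "[:0, - 2 * k\<^sup>2:]"] unfolding \<phi>''_def[abs_def]
  by (simp add: algebra_simps)

lemma phi'_minus: "\<phi>' (- x) = \<phi>' x" and phi''_minus: "\<phi>'' (- x) = - \<phi>'' x"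
  unfolding \<phi>'_def \<phi>''_def phi_minus by simp_all

lemma one_minus_abs_phi_le_sech2: "1 - \<bar>\<phi> x\<bar> \<le> 1 - \<phi> x ^ 2"
proof -
  have "\<bar>\<phi> x\<bar> * \<bar>\<phi> x\<bar> \<le> \<bar>\<phi> x\<bar> * 1" using abs_phi_le_1[of x] by (intro mult_left_mono) auto
  then show ?thesis by (simp add: power2_eq_square)
qed

lemma abs_one_minus_phi_sign:
  "\<bar>if x \<ge> 0 then 1 - \<phi> x else - (1 + \<phi> x)\<bar> = 1 - \<bar>\<phi> x\<bar>"
proof (cases "x \<ge> 0")
  case True
  then show ?thesis using phi_nonneg[OF True] abs_phi_le_1[of x] by simp
next
  case False
  then have "\<phi> x \<le> 0" using phi_nonneg[of "- x"] by (simp add: phi_minus)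
  then show ?thesis using False abs_phi_le_1[of x] by simp
qed

text \<open>An even decaying function has a decaying primitive only up to a multiple of \<open>\<phi>'\<close>: the
  primitive tends to opposite limits \<open>\<plusminus>l\<close>, and \<open>l \<phi>\<close> absorbs them.\<close>

lemma decaying_antiderivative_of_even:
  assumes g: "decaying g" "even_fun g"
  obtains w l where "decaying w" "odd_fun w" "\<And>x. (w has_real_derivative g x - l * \<phi>' x) (at x)"
proof -
  obtain G Lp Lm where G: "\<And>x. (G has_real_derivative g x) (at x)" "G 0 = 0"
    and lim: "(G \<longlongrightarrow> Lp) at_top" "(G \<longlongrightarrow> Lm) at_bot"
    and near: "weighted_poly_bounded (\<lambda>x. exp (- \<bar>x\<bar>)) (\<lambda>x. G x - (if x \<ge> 0 then Lp else Lm))"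
    by (rule decaying_antiderivative_limits[OF g(1)]) blast
  have G_odd: "odd_fun G" by (rule odd_fun_antiderivative[OF G(1) g(2) G(2)])
  have "((\<lambda>x. - G x) \<longlongrightarrow> Lm) at_top"
    using lim(2) G_odd unfolding filterlim_at_bot_mirror by (simp add: odd_fun_def)
  then have L: "Lm = - Lp" by (rule tendsto_unique[OF trivial_limit_at_top_linorder _ tendsto_minus[OF lim(1)]])
  define w where "w x = G x - Lp * \<phi> x" for x
  have dw: "(w has_real_derivative g x - Lp * \<phi>' x) (at x)" for x
    unfolding w_def[abs_def] by (intro DERIV_diff DERIV_cmult G(1) phi_DERIV_phi')
  have "weighted_poly_bounded (\<lambda>x. exp (- \<bar>x\<bar>)) (\<lambda>x. Lp * (if x \<ge> 0 then 1 - \<phi> x else - (1 + \<phi> x)))"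
  proof (rule weighted_poly_boundedI[of _ "4 * \<bar>Lp\<bar>" 0])
    fix x
    have "\<bar>if x \<ge> 0 then 1 - \<phi> x else - (1 + \<phi> x)\<bar> \<le> 1 - \<phi> x ^ 2"
      unfolding abs_one_minus_phi_sign by (rule one_minus_abs_phi_le_sech2)
    then have "\<bar>if x \<ge> 0 then 1 - \<phi> x else - (1 + \<phi> x)\<bar> \<le> 4 * exp (- \<bar>x\<bar>)"
      using sech2_le_exp_abs[of x] by linarith
    moreover have "\<bar>Lp * c\<bar> \<le> 4 * \<bar>Lp\<bar> * (1 + \<bar>x\<bar>) ^ 0 * exp (- \<bar>x\<bar>)"
      if "\<bar>c\<bar> \<le> 4 * exp (- \<bar>x\<bar>)" for c
      using mult_left_mono[OF that, of "\<bar>Lp\<bar>"] by (simp add: abs_mult)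
    ultimately show "\<bar>Lp * (if x \<ge> 0 then 1 - \<phi> x else - (1 + \<phi> x))\<bar> \<le> 4 * \<bar>Lp\<bar> * (1 + \<bar>x\<bar>) ^ 0 * exp (- \<bar>x\<bar>)"
      by blast
  qed
  then have "weighted_poly_bounded (\<lambda>x. exp (- \<bar>x\<bar>))
      (\<lambda>x. (G x - (if x \<ge> 0 then Lp else Lm)) + Lp * (if x \<ge> 0 then 1 - \<phi> x else - (1 + \<phi> x)))"
    using near by (intro weighted_poly_bounded_add) auto
  then have "weighted_poly_bounded (\<lambda>x. exp (- \<bar>x\<bar>)) w"
    unfolding w_def[abs_def] L by (simp add: algebra_simps if_distrib cong: if_cong)
  moreover have "decaying (\<lambda>x. g x - Lp * \<phi>' x)"
    by (intro decaying_diff g(1) smooth_bounded_cmult decaying_phi')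
  ultimately have "decaying w" by (intro smooth_boundedI[OF dw])
  moreover have "odd_fun w" using G_odd unfolding w_def odd_fun_def phi_minus by simp
  ultimately show thesis using that dw by blast
qed

definition Q'' :: "real \<Rightarrow> real" where "Q'' x = Q x * \<phi> x ^ 2 - Q x * \<phi>' x"

lemma Q'_DERIV: "((\<lambda>x. - (Q x * \<phi> x)) has_real_derivative Q'' x) (at x)"
  unfolding Q''_def \<phi>'_def
  by (auto intro!: derivative_eq_intros Q_DERIV phi_DERIV simp: algebra_simps power2_eq_square)

lemma deriv_deriv_Q: "deriv (deriv Q) = Q''"
  by (rule deriv_deriv_eqI[OF Q_DERIV Q'_DERIV])

lemma decaying_Q'': "decaying Q''"
  using decaying_Q_mult_poly_phi[of "[:- k, 0, 1 + k:]"] unfolding Q''_def[abs_def] \<phi>'_def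
  by (simp add: algebra_simps power2_eq_square)

lemma Q''_minus: "Q'' (- x) = Q'' x"
  unfolding Q''_def phi'_minus phi_minus Q_minus by simp

text \<open>The solution of \<open>L A1 = - (3 Q - 2 Q\<^sup>p)\<close>, obtained from \<open>L Q = (1 - p) Q\<^sup>p\<close> and
  \<open>L (x Q') = - 2 Q''\<close>.\<close>

definition A1 :: "real \<Rightarrow> real" where "A1 x = Q x / (2 * k) - 3 / 2 * (x * y1 x)"
definition A1' :: "real \<Rightarrow> real" where "A1' x = - y1 x / (2 * k) - 3 / 2 * y1 x - 3 / 2 * (x * y1' x)"
definition A1'' :: "real \<Rightarrow> real" where
  "A1'' x = - y1' x / (2 * k) - 3 * y1' x - 3 / 2 * (x * ((1 - V x) * y1 x))"

lemma A1_DERIV: "(A1 has_real_derivative A1' x) (at x)"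
proof -
  have "(A1 has_real_derivative - (Q x * \<phi> x) / (2 * k) - 3 / 2 * (y1 x + x * y1' x)) (at x)"
    unfolding A1_def[abs_def] by (intro DERIV_diff DERIV_cdivide DERIV_cmult Q_DERIV DERIV_mult_ident y1_DERIV)
  then show ?thesis unfolding A1'_def y1_def by (simp add: algebra_simps)
qed

lemma A1'_DERIV: "(A1' has_real_derivative A1'' x) (at x)"
proof -
  have "(A1' has_real_derivative
      - y1' x / (2 * k) - 3 / 2 * y1' x - 3 / 2 * (y1' x + x * ((1 - V x) * y1 x))) (at x)"
    unfolding A1'_def[abs_def]
    by (intro DERIV_diff DERIV_cdivide DERIV_minus DERIV_cmult y1_DERIV DERIV_mult_ident y1'_DERIV)
  then show ?thesis unfolding A1''_def by (simp add: algebra_simps)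
qed

lemma deriv_deriv_A1: "deriv (deriv A1) = A1''"
  by (rule deriv_deriv_eqI[OF A1_DERIV A1'_DERIV])

lemma L_A1: "- A1'' x + A1 x - V x * A1 x = - (3 * Q x - 2 * Q x ^ p)"
  unfolding A1''_def A1_def Q_pow_p y1'_def y1_def V_eq using k_pos
  by (simp add: field_simps power2_eq_square)

lemma decaying_A1: "decaying A1"
proof -
  have "decaying (\<lambda>x. 1 / (2 * k) * Q x - 3 / 2 * (x * y1 x))"
    by (intro decaying_diff smooth_bounded_cmult decaying_Q decaying_mult_left decaying_y1 tempered_ident)
  then show ?thesis unfolding A1_def[abs_def] by simp
qed

lemma A1_minus: "A1 (- x) = A1 x"
  unfolding A1_def y1_minus Q_minus by simp

lemma A1''_minus: "A1'' (- x) = A1'' x"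
proof -
  have "y1' (- x) = y1' x" unfolding y1'_def Q_minus phi_minus by simp
  then show ?thesis unfolding A1''_def V_minus y1_minus by simp
qed

definition Wq :: "real \<Rightarrow> real" where
  "Wq = (SOME G. (\<forall>x. (G has_real_derivative Q x) (at x)) \<and> G 0 = 0)"

lemma Wq_DERIV: "(Wq has_real_derivative Q x) (at x)" and Wq_0: "Wq 0 = 0"
proof -
  obtain G where "\<And>x. (G has_real_derivative Q x) (at x)" "G 0 = 0"
    by (rule exists_antiderivative[OF continuous_on_Q]) blast
  then have "(\<forall>x. (Wq has_real_derivative Q x) (at x)) \<and> Wq 0 = 0"
    unfolding Wq_def by (intro someI[of "\<lambda>G. (\<forall>x. (G has_real_derivative Q x) (at x)) \<and> G 0 = 0" G]) blast
  then show "(Wq has_real_derivative Q x) (at x)" "Wq 0 = 0" by blast+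
qed

lemma tempered_Wq: "tempered Wq"
proof (rule smooth_boundedI[OF Wq_DERIV _ decaying_imp_tempered[OF decaying_Q]])
  have "weighted_poly_bounded (\<lambda>x. 1) Q"
    by (rule smooth_bounded_weighted_poly_bounded[OF decaying_imp_tempered[OF decaying_Q]])
  from weighted_poly_bounded_antiderivative[OF Wq_DERIV this]
  show "weighted_poly_bounded (\<lambda>x. 1) Wq" using Wq_0 by simp
qed

definition \<beta> :: real where "\<beta> = (1 - k) / (2 * k)"

text \<open>The \<open>a\<close>-dependent forcing of the second equation is \<open>T'\<close>.\<close>

definition T :: "real \<Rightarrow> real" where "T x = 2 * A1' x + y1 x + 3 / 2 * (x * Q x) + \<beta> * Wq x"

lemma T_DERIV: "(T has_real_derivative - 3 * Q'' x + 3 * A1'' x + V x * A1 x) (at x)"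
proof -
  have deriv: "(T has_real_derivative 2 * A1'' x + y1' x + 3 / 2 * (Q x + x * - (Q x * \<phi> x)) + \<beta> * Q x) (at x)"
    unfolding T_def[abs_def] by (auto intro!: derivative_eq_intros A1'_DERIV y1_DERIV Q_DERIV Wq_DERIV)
  have eq: "2 * A1'' x + y1' x + 3 / 2 * (Q x + x * - (Q x * \<phi> x)) + \<beta> * Q x
      = - 3 * Q'' x + 3 * A1'' x + V x * A1 x"
    unfolding A1''_def A1_def Q''_def \<phi>'_def y1'_def y1_def V_eq \<beta>_def using k_pos
    by (simp add: field_simps power2_eq_square)
  from deriv show ?thesis unfolding eq .
qed

lemma T_0: "T 0 = 0"
  unfolding T_def A1'_def y1_def by (simp add: Wq_0 phi_0)

definition L\<phi> :: "real \<Rightarrow> real" where "L\<phi> x = \<phi> x - \<phi>'' x - V x * \<phi> x"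

definition \<gamma> :: real where "\<gamma> = - 1 / 4 - \<beta>"

text \<open>\<open>D1\<close> and \<open>D2\<close> are explicit primitives, decaying at both ends, showing
  \<open>\<integral> y1 (T - l L\<phi>) = - \<gamma> \<integral> Q\<^sup>2\<close> for every \<open>l\<close>.\<close>

definition D1 :: "real \<Rightarrow> real" where
  "D1 x = 3 / 2 * (x * y1 x ^ 2) + 3 / 4 * (x * Q x ^ 2) + \<beta> * (Q x * Wq x) - Q x * y1 x / (2 * k)"

definition D2 :: "real \<Rightarrow> real" where "D2 x = - (Q x * \<phi> x) * \<phi>' x - \<phi> x * Q'' x"

lemma D1_DERIV: "(D1 has_real_derivative - y1 x * T x - \<gamma> * Q x ^ 2) (at x)"
proof -
  have y1_square: "((\<lambda>x. y1 x ^ 2) has_real_derivative 2 * y1 x * y1' x) (at x)"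
    using DERIV_power[OF y1_DERIV, of 2] by (simp add: algebra_simps)
  have Q_square: "((\<lambda>x. Q x ^ 2) has_real_derivative 2 * Q x * - (Q x * \<phi> x)) (at x)"
    using DERIV_power[OF Q_DERIV, of 2] by (simp add: algebra_simps)
  have Q_Wq: "((\<lambda>x. Q x * Wq x) has_real_derivative - (Q x * \<phi> x) * Wq x + Q x * Q x) (at x)"
    using DERIV_mult'[OF Q_DERIV Wq_DERIV] by (simp add: algebra_simps)
  have Q_y1: "((\<lambda>x. Q x * y1 x) has_real_derivative - (Q x * \<phi> x) * y1 x + Q x * y1' x) (at x)"
    using DERIV_mult'[OF Q_DERIV y1_DERIV] by (simp add: algebra_simps)
  have deriv: "(D1 has_real_derivative
      3 / 2 * (y1 x ^ 2 + x * (2 * y1 x * y1' x)) + 3 / 4 * (Q x ^ 2 + x * (2 * Q x * - (Q x * \<phi> x)))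
      + \<beta> * (- (Q x * \<phi> x) * Wq x + Q x * Q x) - (- (Q x * \<phi> x) * y1 x + Q x * y1' x) / (2 * k)) (at x)"
    unfolding D1_def[abs_def]
    by (intro DERIV_add DERIV_diff DERIV_cmult DERIV_cdivide DERIV_mult_ident y1_square Q_square Q_Wq Q_y1)
  have eq: "3 / 2 * (y1 x ^ 2 + x * (2 * y1 x * y1' x)) + 3 / 4 * (Q x ^ 2 + x * (2 * Q x * - (Q x * \<phi> x)))
      + \<beta> * (- (Q x * \<phi> x) * Wq x + Q x * Q x) - (- (Q x * \<phi> x) * y1 x + Q x * y1' x) / (2 * k)
      = - y1 x * T x - \<gamma> * Q x ^ 2"
    unfolding T_def A1'_def \<gamma>_def \<beta>_def y1'_def y1_def using k_pos
    by (simp add: field_simps power2_eq_square)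
  from deriv show ?thesis unfolding eq .
qed

lemma D2_DERIV: "(D2 has_real_derivative y1 x * L\<phi> x) (at x)"
proof -
  have "(Q'' has_real_derivative - (Q x * \<phi> x) + Q x * \<phi> x * (k + 1) * (1 - \<phi> x ^ 2) * (2 * k + 1)) (at x)"
    unfolding Q''_def[abs_def] \<phi>'_def
    by (auto intro!: derivative_eq_intros Q_DERIV phi_DERIV simp: algebra_simps power2_eq_square)
  then have "(D2 has_real_derivative Q'' x * \<phi>' x + - (Q x * \<phi> x) * \<phi>'' x
      - (\<phi>' x * Q'' x + \<phi> x * (- (Q x * \<phi> x) + Q x * \<phi> x * (k + 1) * (1 - \<phi> x ^ 2) * (2 * k + 1)))) (at x)"
    unfolding D2_def[abs_def]
    by (auto intro!: derivative_eq_intros Q_DERIV phi'_DERIV phi_DERIV_phi'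
        simp: Q''_def \<phi>'_def \<phi>''_def algebra_simps power2_eq_square)
  moreover have "Q'' x * \<phi>' x + - (Q x * \<phi> x) * \<phi>'' x
      - (\<phi>' x * Q'' x + \<phi> x * (- (Q x * \<phi> x) + Q x * \<phi> x * (k + 1) * (1 - \<phi> x ^ 2) * (2 * k + 1)))
      = y1 x * L\<phi> x"
    unfolding y1_def L\<phi>_def V_eq by (simp add: algebra_simps power2_eq_square)
  ultimately show ?thesis by simp
qed

lemma decaying_D1: "decaying D1"
proof -
  have "decaying (\<lambda>x. 3 / 2 * (x * (y1 x * y1 x)) + 3 / 4 * (x * (Q x * Q x)) + \<beta> * (Q x * Wq x)
      - 1 / (2 * k) * (Q x * y1 x))"
    by (intro decaying_add decaying_diff smooth_bounded_cmult decaying_mult_left decaying_mult tempered_ident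
        decaying_imp_tempered decaying_Q decaying_y1 tempered_Wq)
  then show ?thesis unfolding D1_def[abs_def] by (simp add: power2_eq_square)
qed

lemma decaying_D2: "decaying D2"
proof -
  have "decaying (\<lambda>x. Q x * \<phi> x)" using decaying_y1 unfolding y1_def[abs_def] .
  then have "decaying (\<lambda>x. - (Q x * \<phi> x * \<phi>' x) - \<phi> x * Q'' x)"
    by (intro decaying_diff smooth_bounded_minus decaying_mult_left[OF tempered_phi decaying_Q'']
        decaying_mult[OF _ decaying_imp_tempered[OF decaying_phi']])
  then show ?thesis unfolding D2_def[abs_def] by simp
qed

lemma gamma_nonzero: "\<gamma> \<noteq> 0"
proof
  assume "\<gamma> = 0"
  then have "k = 2" using k_pos unfolding \<gamma>_def \<beta>_def by (simp add: field_simps)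
  then show False using k_le by simp
qed

lemma integral_y1_T_nonzero:
  obtains I where "has_improper_integral (\<lambda>x. y1 x * (T x - l * L\<phi> x)) I" "I \<noteq> 0"
proof -
  have Q2: "decaying (\<lambda>x. Q x * Q x)" by (intro decaying_mult decaying_imp_tempered decaying_Q)
  obtain W Lp Lm where W: "\<And>x. (W has_real_derivative Q x * Q x) (at x)"
    and lim: "(W \<longlongrightarrow> Lp) at_top" "(W \<longlongrightarrow> Lm) at_bot"
    by (rule decaying_antiderivative_limits[OF Q2]) blast
  have mono: "W a < W b" if "a < b" for a b
    using W Q_pos by (intro DERIV_pos_imp_increasing[OF that]) (auto intro: mult_pos_pos)
  have "W 1 \<le> Lp"
    by (rule tendsto_lowerbound[OF lim(1)], rule eventually_mono[OF eventually_ge_at_top[of 1]])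
       (use mono in \<open>fastforce simp: le_less\<close>)+
  moreover have "Lm \<le> W (- 1)"
    by (rule tendsto_upperbound[OF lim(2)], rule eventually_mono[OF eventually_le_at_bot[of "- 1"]])
       (use mono in \<open>fastforce simp: le_less\<close>)+
  moreover have "W (- 1) < W 1" by (rule mono) simp
  ultimately have "Lm < Lp" by simp
  define G where "G x = - \<gamma> * W x - D1 x - l * D2 x" for x
  have "(G has_real_derivative y1 x * (T x - l * L\<phi> x)) (at x)" for x
  proof -
    have "(G has_real_derivative - \<gamma> * (Q x * Q x) - (- y1 x * T x - \<gamma> * Q x ^ 2) - l * (y1 x * L\<phi> x)) (at x)"
      unfolding G_def[abs_def] by (intro DERIV_diff DERIV_cmult W D1_DERIV D2_DERIV)
    then show ?thesis by (simp add: algebra_simps power2_eq_square)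
  qed
  moreover have "(G \<longlongrightarrow> - \<gamma> * Lp - 0 - l * 0) at_top" "(G \<longlongrightarrow> - \<gamma> * Lm - 0 - l * 0) at_bot"
    unfolding G_def[abs_def]
    by (intro tendsto_intros lim decaying_tendsto_zero decaying_D1 decaying_D2)+
  ultimately have "has_improper_integral (\<lambda>x. y1 x * (T x - l * L\<phi> x))
      ((- \<gamma> * Lp - 0 - l * 0) - (- \<gamma> * Lm - 0 - l * 0))"
    by (rule has_improper_integralI)
  then have "has_improper_integral (\<lambda>x. y1 x * (T x - l * L\<phi> x)) (- \<gamma> * (Lp - Lm))"
    by (simp add: algebra_simps)
  moreover have "- \<gamma> * (Lp - Lm) \<noteq> 0" using gamma_nonzero \<open>Lm < Lp\<close> by simp
  ultimately show thesis by (rule that)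
qed

section \<open>The ansatz and the two equations\<close>


definition ansatz_error :: "real poly \<Rightarrow> real poly \<Rightarrow> real \<Rightarrow> real" where
  "ansatz_error P R x =
     V x * poly P x + \<phi>'' x * poly R x + 2 * \<phi>' x * poly (pderiv R) x + V x * \<phi> x * poly R x"

lemma deriv_deriv_ansatz:
  assumes "smooth_bounded w Abar"
  shows "deriv (deriv (\<lambda>x. Abar x + poly P x + \<phi> x * poly R x)) x =
    deriv (deriv Abar) x + poly (pderiv (pderiv P)) x + \<phi> x * poly (pderiv (pderiv R)) x
    + 2 * \<phi>' x * poly (pderiv R) x + \<phi>'' x * poly R x"
proof -
  define D where "D x = deriv Abar x + poly (pderiv P) x + (\<phi> x * poly (pderiv R) x + \<phi>' x * poly R x)" for x
  have d1: "((\<lambda>x. Abar x + poly P x + \<phi> x * poly R x) has_real_derivative D x) (at x)" for x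
    unfolding D_def
    by (intro DERIV_add smooth_bounded_DERIV[OF assms] poly_DERIV DERIV_mult'[OF phi_DERIV_phi' poly_DERIV])
  have d2: "(D has_real_derivative deriv (deriv Abar) x + poly (pderiv (pderiv P)) x
      + ((\<phi> x * poly (pderiv (pderiv R)) x + \<phi>' x * poly (pderiv R) x)
      + (\<phi>' x * poly (pderiv R) x + \<phi>'' x * poly R x))) (at x)" for x
    unfolding D_def[abs_def]
    by (intro DERIV_add smooth_bounded_DERIV[OF smooth_bounded_deriv[OF assms]] poly_DERIV
        DERIV_mult'[OF phi_DERIV_phi' poly_DERIV] DERIV_mult'[OF phi'_DERIV poly_DERIV])
  show ?thesis using deriv_deriv_eqI[OF d1 d2] by (simp add: algebra_simps)
qed

lemma Lop_ansatz:
  assumes "smooth_bounded w Abar"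
  shows "Lop p (\<lambda>x. Abar x + poly P x + \<phi> x * poly R x) x =
    (- deriv (deriv Abar) x + Abar x - V x * Abar x) + poly (P - pderiv (pderiv P)) x
    + \<phi> x * poly (R - pderiv (pderiv R)) x - ansatz_error P R x"
  unfolding Lop_def deriv_deriv_ansatz[OF assms] ansatz_error_def V_def[symmetric]
  by (simp add: algebra_simps)

lemma ansatz_error_add_const:
  "ansatz_error P (R + [:c:]) x = ansatz_error P R x + c * (\<phi>'' x + V x * \<phi> x)"
  unfolding ansatz_error_def by (simp add: pderiv_add algebra_simps)

lemma decaying_ansatz_error: "decaying (ansatz_error P R)"
proof -
  have "decaying (\<lambda>x. V x * poly P x + \<phi>'' x * poly R x + 2 * (\<phi>' x * poly (pderiv R) x)
      + V x * \<phi> x * poly R x)"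
    by (intro decaying_add decaying_mult smooth_bounded_cmult decaying_V decaying_phi' decaying_phi''
        tempered_poly tempered_phi)
  then show ?thesis unfolding ansatz_error_def[abs_def] by (simp add: mult.assoc)
qed

lemma even_fun_ansatz_error:
  "even_fun (poly P) \<Longrightarrow> odd_fun (poly R) \<Longrightarrow> even_fun (ansatz_error P R)"
  using even_fun_poly_pderiv[of R] unfolding ansatz_error_def even_fun_def odd_fun_def
  by (simp add: V_minus phi_minus phi'_minus phi''_minus)

lemma odd_fun_ansatz_error:
  "odd_fun (poly P) \<Longrightarrow> even_fun (poly R) \<Longrightarrow> odd_fun (ansatz_error P R)"
  using odd_fun_poly_pderiv[of R] unfolding ansatz_error_def even_fun_def odd_fun_def
  by (simp add: V_minus phi_minus phi'_minus phi''_minus algebra_simps)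

lemma deriv_deriv_A0_A1:
  assumes "decaying A0"
  shows "deriv (deriv (\<lambda>x. A0 x + a * A1 x)) x = deriv (deriv A0) x + a * A1'' x"
proof -
  have "((\<lambda>x. A0 x + a * A1 x) has_real_derivative deriv A0 x + a * A1' x) (at x)" for x
    by (rule DERIV_add[OF smooth_bounded_DERIV[OF assms] DERIV_cmult[OF A1_DERIV]])
  moreover have "((\<lambda>x. deriv A0 x + a * A1' x) has_real_derivative deriv (deriv A0) x + a * A1'' x) (at x)" for x
    by (rule DERIV_add[OF smooth_bounded_DERIV[OF smooth_bounded_deriv[OF assms]] DERIV_cmult[OF A1'_DERIV]])
  ultimately have "deriv (deriv (\<lambda>x. A0 x + a * A1 x)) = (\<lambda>x. deriv (deriv A0) x + a * A1'' x)"
    by (rule deriv_deriv_eqI)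
  then show ?thesis by simp
qed

lemma decaying_A0_A1: "decaying A0 \<Longrightarrow> decaying (\<lambda>x. A0 x + a * A1 x)"
  by (intro decaying_add smooth_bounded_cmult decaying_A1)

lemma has_improper_integral_y1_odd:
  "decaying h \<Longrightarrow> even_fun h \<Longrightarrow> has_improper_integral (\<lambda>x. y1 x * h x) 0"
  by (intro odd_decaying_has_improper_integral_0 decaying_mult decaying_y1 decaying_imp_tempered)
     (auto simp: even_fun_def odd_fun_def y1_minus)

lemma DERIV_soliton_nonlinearity:
  "((\<lambda>y. 3 * Q y - 2 * Q y ^ p) has_real_derivative
     3 * - (Q x * \<phi> x) - 2 * (real p * Q x ^ (p - 1) * - (Q x * \<phi> x))) (at x)"
  by (auto intro!: derivative_eq_intros Q_DERIV simp: algebra_simps)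

lemma first_equation:
  assumes Fbar: "decaying Fbar" "odd_fun Fbar" and Ft: "odd_fun (poly Ft)" and Fh: "even_fun (poly Fh)"
  defines "At \<equiv> poly_resolvent (pint Ft)" and "Ah \<equiv> poly_resolvent (pint Fh)"
  obtains A0 where "decaying A0" "even_fun A0"
    "\<And>a x. deriv (Lop p (\<lambda>x. (A0 x + a * A1 x) + poly At x + \<phi> x * poly Ah x)) x
        + a * deriv (\<lambda>y. 3 * Q y - 2 * Q y ^ p) x = Fbar x + poly Ft x + \<phi> x * poly Fh x"
proof -
  define g where "g x = Fbar x - \<phi>' x * poly (pint Fh) x" for x
  have g: "decaying g" "odd_fun g"
    unfolding g_def[abs_def] using Fbar odd_fun_poly_pint[OF Fh]
    by (auto intro!: decaying_diff decaying_mult decaying_phi' tempered_poly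
             simp: odd_fun_def phi'_minus)
  obtain w where w: "decaying w" "even_fun w" "\<And>x. (w has_real_derivative g x) (at x)"
    by (rule decaying_antiderivative_of_odd[OF g]) blast
  define h where "h x = w x + ansatz_error At Ah x" for x
  have h: "decaying h" "even_fun h"
    unfolding h_def[abs_def] At_def Ah_def
    using w even_fun_ansatz_error[OF even_fun_poly_resolvent[OF even_fun_poly_pint[OF Ft]]
        odd_fun_poly_resolvent[OF odd_fun_poly_pint[OF Fh]]]
    by (auto intro!: decaying_add decaying_ansatz_error simp: even_fun_def)
  obtain A0 where A0: "decaying A0" "\<And>x. - deriv (deriv A0) x + A0 x - V x * A0 x = h x" "even_fun A0"
    by (rule solve_linearized[OF h(1) has_improper_integral_y1_odd[OF h]]) (use h in blast)
  show thesis
  proof (rule that[OF A0(1) A0(3)])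
    fix a x
    let ?A = "\<lambda>x. (A0 x + a * A1 x) + poly At x + \<phi> x * poly Ah x"
    have resolvent: "At - pderiv (pderiv At) = pint Ft" "Ah - pderiv (pderiv Ah) = pint Fh"
      unfolding At_def Ah_def by (rule poly_resolvent_eq)+
    have "Lop p ?A x = w x + poly (pint Ft) x + \<phi> x * poly (pint Fh) x - a * (3 * Q x - 2 * Q x ^ p)" for x
    proof -
      have "a * (- A1'' x + A1 x - V x * A1 x) = a * - (3 * Q x - 2 * Q x ^ p)" by (simp only: L_A1)
      then show ?thesis
        unfolding Lop_ansatz[OF decaying_A0_A1[OF A0(1)]] deriv_deriv_A0_A1[OF A0(1)] resolvent
        using A0(2)[of x] unfolding h_def by (simp add: algebra_simps)
    qed
    then have "Lop p ?A = (\<lambda>x. w x + poly (pint Ft) x + \<phi> x * poly (pint Fh) x - a * (3 * Q x - 2 * Q x ^ p))"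
      by (rule ext)
    moreover have "((\<lambda>x. w x + poly (pint Ft) x + \<phi> x * poly (pint Fh) x - a * (3 * Q x - 2 * Q x ^ p))
        has_real_derivative g x + poly Ft x + (\<phi> x * poly Fh x + \<phi>' x * poly (pint Fh) x)
          - a * (3 * - (Q x * \<phi> x) - 2 * (real p * Q x ^ (p - 1) * - (Q x * \<phi> x)))) (at x)"
      by (intro DERIV_diff DERIV_add DERIV_cmult w(3) DERIV_poly_pint DERIV_soliton_nonlinearity
          DERIV_mult'[OF phi_DERIV_phi' DERIV_poly_pint])
    ultimately show "deriv (Lop p ?A) x + a * deriv (\<lambda>y. 3 * Q y - 2 * Q y ^ p) x
        = Fbar x + poly Ft x + \<phi> x * poly Fh x"
      unfolding DERIV_imp_deriv[OF DERIV_soliton_nonlinearity] g_def by (simp add: DERIV_imp_deriv)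
  qed
qed

lemma primitive_of_a_forcing:
  obtains wa la where "decaying wa" "odd_fun wa" "\<And>x. wa x + la * \<phi> x = T x"
    "\<And>x. (wa has_real_derivative (- 3 * Q'' x + 3 * A1'' x + V x * A1 x) - la * \<phi>' x) (at x)"
proof -
  have "decaying (\<lambda>x. - 3 * Q'' x + 3 * A1'' x + V x * A1 x)"
    using deriv_deriv_A1 smooth_bounded_deriv[OF smooth_bounded_deriv[OF decaying_A1]]
    by (intro decaying_add smooth_bounded_cmult decaying_Q'' decaying_mult decaying_V
        decaying_imp_tempered decaying_A1) simp
  moreover have "even_fun (\<lambda>x. - 3 * Q'' x + 3 * A1'' x + V x * A1 x)"
    unfolding even_fun_def by (simp add: Q''_minus A1''_minus V_minus A1_minus)
  ultimately obtain wa la where wa: "decaying wa" "odd_fun wa"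
    "\<And>x. (wa has_real_derivative (- 3 * Q'' x + 3 * A1'' x + V x * A1 x) - la * \<phi>' x) (at x)"
    by (rule decaying_antiderivative_of_even) blast
  have "((\<lambda>x. wa x + la * \<phi> x - T x) has_real_derivative 0) (at x)" for x
    using DERIV_diff[OF DERIV_add[OF wa(3) DERIV_cmult[OF phi_DERIV_phi', where c = la]] T_DERIV] by simp
  then have "wa x + la * \<phi> x - T x = wa 0 + la * \<phi> 0 - T 0" for x
    using DERIV_isconst_all[of "\<lambda>x. wa x + la * \<phi> x - T x" x 0] by blast
  moreover have "wa 0 = 0" using odd_funD[OF wa(2), of 0] by simp
  ultimately have "wa x + la * \<phi> x = T x" for x using T_0 phi_0 by simp
  then show thesis using that wa by blast
qed

text \<open>Here \<open>wa + la (\<phi>'' + V \<phi>) = T - la L\<phi>\<close>, whose integral against \<open>y1\<close> does not vanish.\<close>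

lemma orthogonalizing_coefficient:
  assumes h0: "decaying h0" and wa: "decaying wa" "\<And>x. wa x + la * \<phi> x = T x"
  obtains a where "has_improper_integral (\<lambda>x. y1 x * (h0 x + a * (wa x + la * (\<phi>'' x + V x * \<phi> x)))) 0"
proof -
  obtain I0 where I0: "has_improper_integral (\<lambda>x. y1 x * h0 x) I0"
    by (rule decaying_has_improper_integral[OF decaying_mult[OF decaying_y1 decaying_imp_tempered[OF h0]]])
  obtain Ia where Ia: "has_improper_integral (\<lambda>x. y1 x * (T x - la * L\<phi> x)) Ia" "Ia \<noteq> 0"
    by (rule integral_y1_T_nonzero)
  have eq: "wa x + la * (\<phi>'' x + V x * \<phi> x) = T x - la * L\<phi> x" for x
    using wa(2)[of x] unfolding L\<phi>_def by (simp add: algebra_simps)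
  have "(\<lambda>x. y1 x * (h0 x + - I0 / Ia * (wa x + la * (\<phi>'' x + V x * \<phi> x))))
      = (\<lambda>x. y1 x * h0 x + - I0 / Ia * (y1 x * (T x - la * L\<phi> x)))"
    unfolding eq by (simp add: algebra_simps)
  moreover have "has_improper_integral (\<lambda>x. y1 x * h0 x + - I0 / Ia * (y1 x * (T x - la * L\<phi> x)))
      (I0 + - I0 / Ia * Ia)"
    by (rule has_improper_integral_add_cmult[OF I0 Ia(1)])
  ultimately show thesis using Ia(2) by (intro that[of "- I0 / Ia"]) simp
qed

lemma primitive_of_B_forcing:
  assumes A0: "decaying A0" "even_fun A0" and At: "even_fun (poly At)" and Ah: "odd_fun (poly Ah)"
    and Gbar: "decaying Gbar" "even_fun Gbar" and Sh: "even_fun (poly Sh)"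
  obtains w l where "decaying w" "odd_fun w"
    "\<And>x. (w has_real_derivative Gbar x + 3 * deriv (deriv A0) x
      + 3 * (\<phi>'' x * poly Ah x + 2 * \<phi>' x * poly (pderiv Ah) x)
      + V x * (A0 x + poly At x + \<phi> x * poly Ah x) - \<phi>' x * poly Sh x - l * \<phi>' x) (at x)"
proof -
  define g where "g x = Gbar x + 3 * deriv (deriv A0) x
      + 3 * (\<phi>'' x * poly Ah x + 2 * \<phi>' x * poly (pderiv Ah) x)
      + V x * (A0 x + poly At x + \<phi> x * poly Ah x) - \<phi>' x * poly Sh x" for x
  have "decaying g"
    unfolding g_def[abs_def]
    by (intro decaying_add decaying_diff smooth_bounded_cmult decaying_mult decaying_mult_left
        Gbar(1) smooth_bounded_deriv A0(1) decaying_phi' decaying_phi'' decaying_V tempered_poly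
        tempered_mult tempered_phi smooth_bounded_add decaying_imp_tempered) simp_all
  moreover have "even_fun g"
  proof -
    have "odd_fun (deriv A0)" by (rule odd_fun_deriv[OF smooth_bounded_differentiable[OF A0(1)] A0(2)])
    then have "even_fun (deriv (deriv A0))"
      by (rule even_fun_deriv[OF smooth_bounded_differentiable[OF smooth_bounded_deriv[OF A0(1)]]])
    then show ?thesis
      using A0(2) Gbar(2) At Ah Sh even_fun_poly_pderiv[OF Ah]
      unfolding g_def[abs_def] even_fun_def odd_fun_def
      by (simp add: V_minus phi_minus phi'_minus phi''_minus)
  qed
  ultimately obtain w l where "decaying w" "odd_fun w" "\<And>x. (w has_real_derivative g x - l * \<phi>' x) (at x)"
    by (rule decaying_antiderivative_of_even) blast
  then show thesis unfolding g_def by (rule that)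
qed

lemma second_equation_verification:
  assumes A0: "decaying A0" and Bbar: "decaying Bbar"
    and w0: "\<And>x. (w0 has_real_derivative Gbar x + 3 * deriv (deriv A0) x
      + 3 * (\<phi>'' x * poly Ah x + 2 * \<phi>' x * poly (pderiv Ah) x)
      + V x * (A0 x + poly At x + \<phi> x * poly Ah x) - \<phi>' x * poly Sh x - l0 * \<phi>' x) (at x)"
    and wa: "\<And>x. (wa has_real_derivative (- 3 * Q'' x + 3 * A1'' x + V x * A1 x) - la * \<phi>' x) (at x)"
    and L_Bbar: "\<And>x. - deriv (deriv Bbar) x + Bbar x - V x * Bbar x
      = w0 x + a * wa x + ansatz_error Bt (Bs + [:l0 + a * la:]) x"
    and Bt: "Bt - pderiv (pderiv Bt) = pint (Gt + smult 3 (pderiv (pderiv At)))"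
    and Bs: "Bs - pderiv (pderiv Bs) = Sh" and Sh: "Sh = pint (Gh + smult 3 (pderiv (pderiv Ah)))"
  shows "deriv (Lop p (\<lambda>x. Bbar x + poly Bt x + \<phi> x * poly (Bs + [:l0 + a * la:]) x)) x
       + 3 * a * deriv (deriv Q) x
       - 3 * deriv (deriv (\<lambda>x. (A0 x + a * A1 x) + poly At x + \<phi> x * poly Ah x)) x
       - real p * Q x ^ (p - 1) * ((A0 x + a * A1 x) + poly At x + \<phi> x * poly Ah x)
       = Gbar x + poly Gt x + \<phi> x * poly Gh x"
proof -
  let ?B = "\<lambda>x. Bbar x + poly Bt x + \<phi> x * poly (Bs + [:l0 + a * la:]) x"
  define Rt where "Rt = pint (Gt + smult 3 (pderiv (pderiv At)))"
  have resolvent_Bs: "(Bs + [:c:]) - pderiv (pderiv (Bs + [:c:])) = Sh + [:c:]" for c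
    using Bs by (simp add: pderiv_add)
  have "Lop p ?B y = w0 y + a * wa y + poly Rt y + \<phi> y * (poly Sh y + (l0 + a * la))" for y
    unfolding Lop_ansatz[OF Bbar] L_Bbar Bt Rt_def[symmetric] resolvent_Bs by (simp add: algebra_simps)
  then have Lop_B: "Lop p ?B = (\<lambda>y. w0 y + a * wa y + poly Rt y + \<phi> y * (poly Sh y + (l0 + a * la)))"
    by (rule ext)
  have "((\<lambda>y. poly Sh y + (l0 + a * la)) has_real_derivative poly (Gh + smult 3 (pderiv (pderiv Ah))) x) (at x)"
    unfolding Sh using DERIV_add[OF DERIV_poly_pint[of "Gh + smult 3 (pderiv (pderiv Ah))" x] DERIV_const]
    by simp
  then have "((\<lambda>y. w0 y + a * wa y + poly Rt y + \<phi> y * (poly Sh y + (l0 + a * la))) has_real_derivative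
      (Gbar x + 3 * deriv (deriv A0) x + 3 * (\<phi>'' x * poly Ah x + 2 * \<phi>' x * poly (pderiv Ah) x)
        + V x * (A0 x + poly At x + \<phi> x * poly Ah x) - \<phi>' x * poly Sh x - l0 * \<phi>' x)
      + a * ((- 3 * Q'' x + 3 * A1'' x + V x * A1 x) - la * \<phi>' x)
      + poly (Gt + smult 3 (pderiv (pderiv At))) x
      + (\<phi> x * poly (Gh + smult 3 (pderiv (pderiv Ah))) x + \<phi>' x * (poly Sh x + (l0 + a * la)))) (at x)"
    unfolding Rt_def by (intro DERIV_add DERIV_cmult w0 wa DERIV_poly_pint DERIV_mult'[OF phi_DERIV_phi'])
  from DERIV_imp_deriv[OF this] show ?thesis
    unfolding Lop_B[symmetric] deriv_deriv_ansatz[OF decaying_A0_A1[OF A0]] deriv_deriv_A0_A1[OF A0]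
      deriv_deriv_Q V_def[symmetric]
    by (simp add: algebra_simps)
qed

lemma second_equation:
  assumes A0: "decaying A0" "even_fun A0" and At: "even_fun (poly At)" and Ah: "odd_fun (poly Ah)"
    and Gbar: "decaying Gbar" "even_fun Gbar" and Gt: "even_fun (poly Gt)" and Gh: "odd_fun (poly Gh)"
  defines "Bt \<equiv> poly_resolvent (pint (Gt + smult 3 (pderiv (pderiv At))))"
    and "Bs \<equiv> poly_resolvent (pint (Gh + smult 3 (pderiv (pderiv Ah))))"
  obtains a c Bbar where "decaying Bbar" "odd_fun Bbar"
    "\<And>x. deriv (Lop p (\<lambda>x. Bbar x + poly Bt x + \<phi> x * poly (Bs + [:c:]) x)) x + 3 * a * deriv (deriv Q) x
       - 3 * deriv (deriv (\<lambda>x. (A0 x + a * A1 x) + poly At x + \<phi> x * poly Ah x)) x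
       - real p * Q x ^ (p - 1) * ((A0 x + a * A1 x) + poly At x + \<phi> x * poly Ah x)
       = Gbar x + poly Gt x + \<phi> x * poly Gh x"
proof -
  define Sh where "Sh = pint (Gh + smult 3 (pderiv (pderiv Ah)))"
  have Bt: "odd_fun (poly Bt)" and Bs: "even_fun (poly Bs)"
    unfolding Bt_def Bs_def
    by (rule odd_fun_poly_resolvent_pint_add_pderiv2[OF Gt At],
        rule even_fun_poly_resolvent_pint_add_pderiv2[OF Gh Ah])
  have "odd_fun (poly (Gh + smult 3 (pderiv (pderiv Ah))))"
    using Gh odd_fun_poly_pderiv[OF even_fun_poly_pderiv[OF Ah]] by (simp add: odd_fun_def)
  then have Sh: "even_fun (poly Sh)"
    unfolding Sh_def by (rule even_fun_poly_pint)
  obtain w0 l0 where w0: "decaying w0" "odd_fun w0"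
    "\<And>x. (w0 has_real_derivative Gbar x + 3 * deriv (deriv A0) x
      + 3 * (\<phi>'' x * poly Ah x + 2 * \<phi>' x * poly (pderiv Ah) x)
      + V x * (A0 x + poly At x + \<phi> x * poly Ah x) - \<phi>' x * poly Sh x - l0 * \<phi>' x) (at x)"
    by (rule primitive_of_B_forcing[OF A0 At Ah Gbar Sh]) blast
  obtain wa la where wa: "decaying wa" "odd_fun wa" "\<And>x. wa x + la * \<phi> x = T x"
    "\<And>x. (wa has_real_derivative (- 3 * Q'' x + 3 * A1'' x + V x * A1 x) - la * \<phi>' x) (at x)"
    by (rule primitive_of_a_forcing) blast
  define h0 where "h0 x = w0 x + ansatz_error Bt (Bs + [:l0:]) x" for x
  have h0: "decaying h0" "odd_fun h0"
    unfolding h0_def[abs_def]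
    using w0 odd_fun_ansatz_error[OF Bt, of "Bs + [:l0:]"] Bs
    by (auto intro!: decaying_add decaying_ansatz_error simp: odd_fun_def even_fun_def)
  obtain a where orth: "has_improper_integral
      (\<lambda>x. y1 x * (h0 x + a * (wa x + la * (\<phi>'' x + V x * \<phi> x)))) 0"
    by (rule orthogonalizing_coefficient[OF h0(1) wa(1,3)]) blast
  define h where "h x = h0 x + a * (wa x + la * (\<phi>'' x + V x * \<phi> x))" for x
  have "decaying h"
    unfolding h_def[abs_def]
    by (intro decaying_add smooth_bounded_cmult h0 wa decaying_phi'' decaying_mult decaying_V tempered_phi)
  moreover have "odd_fun h"
    using h0(2) wa(2) unfolding h_def[abs_def] odd_fun_def
    by (simp add: V_minus phi_minus phi''_minus algebra_simps)
  ultimately obtain Bbar where Bbar: "decaying Bbar" "\<And>x. - deriv (deriv Bbar) x + Bbar x - V x * Bbar x = h x"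
    "odd_fun Bbar"
    using solve_linearized[of h] orth unfolding h_def[symmetric] by blast
  have "h x = w0 x + a * wa x + ansatz_error Bt (Bs + [:l0 + a * la:]) x" for x
    unfolding h_def h0_def ansatz_error_add_const by (simp add: algebra_simps)
  then have L_Bbar: "- deriv (deriv Bbar) x + Bbar x - V x * Bbar x
      = w0 x + a * wa x + ansatz_error Bt (Bs + [:l0 + a * la:]) x" for x
    using Bbar(2) by simp
  show thesis
    by (rule that[of Bbar "l0 + a * la" a, OF Bbar(1,3)],
        rule second_equation_verification[OF A0(1) Bbar(1) w0(3) wa(4) L_Bbar])
       (simp_all add: Bt_def Bs_def Sh_def poly_resolvent_eq)
qed

end

theorem proposition2:
  fixes p :: nat and F G Fbar Gbar :: "real \<Rightarrow> real"
    and Ft Fh Gt Gh :: "real poly"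
  assumes p: "p \<in> {2, 3, 4}"
    and F: "F = (\<lambda>x. Fbar x + poly Ft x + phi p x * poly Fh x)"
    and G: "G = (\<lambda>x. Gbar x + poly Gt x + phi p x * poly Gh x)"
    and Fbar: "classY Fbar" "odd_fun Fbar"
    and Gbar: "classY Gbar" "even_fun Gbar"
    and Ft: "odd_fun (poly Ft)" and Gh: "odd_fun (poly Gh)"
    and Fh: "even_fun (poly Fh)" and Gt: "even_fun (poly Gt)"
  shows "\<exists>(a::real) Abar Bbar (At::real poly) Ah Bt Bh.
    classY Abar \<and> classY Bbar \<and> even_fun Abar \<and> odd_fun Bbar \<and>
    even_fun (poly At) \<and> even_fun (poly Bh) \<and>
    odd_fun (poly Ah) \<and> odd_fun (poly Bt) \<and>
    (let A = (\<lambda>x. Abar x + poly At x + phi p x * poly Ah x);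
         B = (\<lambda>x. Bbar x + poly Bt x + phi p x * poly Bh x)
     in (\<forall>x. deriv (Lop p A) x
              + a * deriv (\<lambda>y. 3 * Qp p y - 2 * (Qp p y) ^ p) x = F x) \<and>
        (\<forall>x. deriv (Lop p B) x + 3 * a * deriv (deriv (Qp p)) x
              - 3 * deriv (deriv A) x - real p * (Qp p x) ^ (p - 1) * A x = G x)) \<and>
    degree At \<le> 1 + degree Ft \<and>
    degree Bt \<le> max (1 + degree Gt) (degree Ft) \<and>
    degree Ah \<le> 1 + degree Fh \<and>
    degree Bh \<le> max (1 + degree Gh) (degree Fh) \<and>
    (Ft = 0 \<longrightarrow> At = 0) \<and>
    (Fh = 0 \<longrightarrow> Ah = 0) \<and>
    (pderiv (pderiv At) = 0 \<and> Gt = 0 \<longrightarrow> Bt = 0) \<and>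
    (pderiv (pderiv Ah) = 0 \<and> Gh = 0 \<longrightarrow> degree Bh = 0)"
proof -
  interpret soliton p by unfold_locales (rule p)
  define At where "At = poly_resolvent (pint Ft)"
  define Ah where "Ah = poly_resolvent (pint Fh)"
  define Bt where "Bt = poly_resolvent (pint (Gt + smult 3 (pderiv (pderiv At))))"
  define Bs where "Bs = poly_resolvent (pint (Gh + smult 3 (pderiv (pderiv Ah))))"
  obtain A0 where A0: "decaying A0" "even_fun A0"
    "\<And>a x. deriv (Lop p (\<lambda>x. (A0 x + a * A1 x) + poly At x + \<phi> x * poly Ah x)) x
        + a * deriv (\<lambda>y. 3 * Q y - 2 * Q y ^ p) x = Fbar x + poly Ft x + \<phi> x * poly Fh x"
    using Fbar(1) unfolding classY_iff_decaying
    by (rule first_equation[OF _ Fbar(2) Ft Fh, folded At_def Ah_def]) blast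
  obtain a c Bbar where Bbar: "decaying Bbar" "odd_fun Bbar"
    "\<And>x. deriv (Lop p (\<lambda>x. Bbar x + poly Bt x + \<phi> x * poly (Bs + [:c:]) x)) x + 3 * a * deriv (deriv Q) x
       - 3 * deriv (deriv (\<lambda>x. (A0 x + a * A1 x) + poly At x + \<phi> x * poly Ah x)) x
       - real p * Q x ^ (p - 1) * ((A0 x + a * A1 x) + poly At x + \<phi> x * poly Ah x)
       = Gbar x + poly Gt x + \<phi> x * poly Gh x"
    using Gbar(1) unfolding classY_iff_decaying
    by (rule second_equation[OF A0(1,2) ansatz_polynomials(1,2)[OF Ft Fh Gt Gh At_def Ah_def Bt_def refl]
          _ Gbar(2) Gt Gh, folded Bt_def Bs_def]) blast
  note polynomials = ansatz_polynomials[OF Ft Fh Gt Gh At_def Ah_def Bt_def, of "Bs + [:c:]" c, folded Bs_def]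
  have "classY (\<lambda>x. A0 x + a * A1 x)" "classY Bbar" "even_fun (\<lambda>x. A0 x + a * A1 x)"
    using decaying_A0_A1[OF A0(1)] Bbar(1) A0(2) by (simp_all add: classY_iff_decaying even_fun_def A1_minus)
  then show ?thesis
    unfolding Let_def F G
    by (intro exI[of _ a] exI[of _ "\<lambda>x. A0 x + a * A1 x"] exI[of _ Bbar] exI[of _ At] exI[of _ Ah]
        exI[of _ Bt] exI[of _ "Bs + [:c:]"] conjI allI impI A0(3) Bbar(2,3) polynomials(1-8))
       (auto intro: polynomials(9-12))
qed

end
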